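(* Assume the setting below. There exists a constant $C\geq0$, independent of $\varepsilon$ and $h$, such that for all $n=0,\ldots,N$ and $x,y\in\mathbb R^d$, $$|v^\varepsilon(t_n,x)-v^\varepsilon(t_n,y)|\leq LC|x-y|\quad\text{and}\quad|\widetilde v(t_n,x)-v^\varepsilon(t_n,x)|\leq LC\varepsilon.$$
   Context: Let $T>0$, $d,p,q\ge1$, and $(\Omega,\mathbb F,\mathbb P)$ with filtration generated by a $p$-dimensional Brownian motion $B$. Let $A\subseteq\mathbb R^q$ be a compact subset of a separable metric space, $\mu:[0,T]\times\mathbb R^d\times A\to\mathbb R^d$, $\sigma:[0,T]\times\mathbb R^d\times A\to\mathbb R^{d\times p}$ continuous with $|\mu(t,x,a)-\mu(s,y,a)|+\|\sigma(t,x,a)-\sigma(s,y,a)\|\leq C_0(|x-y|+|t-s|^{1/2})$, and $\psi:\mathbb R^d\to\mathbb R$ continuous with $|\psi(x)-\psi(y)|\le L|x-y|$. Let $N\ge1$, $h=T/N$, $t_n=nh$. $\mathcal A_h$ is the set of $A$-valued progressively measurable processes $\alpha_s=\sum_{i=0}^{N-1}a_i\mathbf 1_{s\in[t_i,t_{i+1})}$; for $\varepsilon>0$, $\mathcal E_h$ is the set of $\mathbb R^d$-valued progressively measurable processes $e_s=\sum_{i=0}^{N-1}e_i\mathbf 1_{s\in[t_i,t_{i+1})}$ with $|e_i|\le\varepsilon$. For $\alpha\in\mathcal A_h$, $e\in\mathcal E_h$ define $\widetilde X^{t_n,x,\alpha,e}$ by $\widetilde X_{t_n}=x$, $\widetilde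 X_{t_{i+1}}=\widetilde X_{t_i}+\mu(t_i,\widetilde X_{t_i}+e_i,a_i)h+\sigma(t_i,\widetilde X_{t_i}+e_i,a_i)(B_{t_{i+1}}-B_{t_i})$, $i=n,\ldots,N-1$, and $\widetilde X^{t_n,x,\alpha}:=\widetilde X^{t_n,x,\alpha,0}$ (the Euler–Maruyama scheme). Set $\widetilde v(t_n,x)=\sup_{\alpha\in\mathcal A_h}\mathbb E[\psi(\widetilde X^{t_n,x,\alpha}_T)]$ and $v^\varepsilon(t_n,x)=\sup_{\alpha\in\mathcal A_h,e\in\mathcal E_h}\mathbb E[\psi(\widetilde X^{t_n,x,\alpha,e}_T)]$. *)

theory Defs
  imports "HOL-Probability.Probability"
begin

definition brownian_motion :: "'w measure \<Rightarrow> (real \<Rightarrow> 'w \<Rightarrow> real^'p) \<Rightarrow> bool" where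
  "brownian_motion M B \<longleftrightarrow>
     prob_space M \<and>
     (\<forall>t\<ge>0. B t \<in> borel_measurable M) \<and>
     (\<forall>\<omega>\<in>space M. B 0 \<omega> = 0 \<and> continuous_on {0..} (\<lambda>t. B t \<omega>)) \<and>
     (\<forall>s t. 0 \<le> s \<and> s < t \<longrightarrow>
        distributed M lborel (\<lambda>\<omega>. B t \<omega> - B s \<omega>)
          (\<lambda>z. ennreal (\<Prod>i\<in>UNIV. normal_density 0 (sqrt (t - s)) (z $ i)))) \<and>
     (\<forall>(k::nat) (u::nat \<Rightarrow> real). 0 \<le> u 0 \<and> (\<forall>i<k. u i < u (Suc i)) \<longrightarrow>
        prob_space.indep_vars M (\<lambda>_. borel) (\<lambda>i \<omega>. B (u (Suc i)) \<omega> - B (u i) \<omega>) {..<k})"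

definition BM_filtration :: "'w measure \<Rightarrow> (real \<Rightarrow> 'w \<Rightarrow> real^'p) \<Rightarrow> real \<Rightarrow> 'w measure" where
  "BM_filtration M B t =
     sigma (space M) {B r -` S \<inter> space M | r S. r \<in> {0..t} \<and> S \<in> sets borel}"

definition grid_time :: "real \<Rightarrow> nat \<Rightarrow> nat \<Rightarrow> real" where
  "grid_time T N i = real i * (T / real N)"

text \<open>Piecewise constant progressively measurable A-valued controls on the grid
  (alpha_s = a_i on [t_i,t_{i+1})): exactly a_i F_{t_i}-measurable with values in A.\<close>
definition grid_controls ::
  "'w measure \<Rightarrow> (real \<Rightarrow> 'w \<Rightarrow> real^'p) \<Rightarrow> real \<Rightarrow> nat \<Rightarrow> ('c::topological_space) set
     \<Rightarrow> (nat \<Rightarrow> 'w \<Rightarrow> 'c) set" where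
  "grid_controls M B T N A =
     {a. \<forall>i<N. (\<forall>\<omega>\<in>space M. a i \<omega> \<in> A) \<and>
                a i \<in> borel_measurable (BM_filtration M B (grid_time T N i))}"

definition grid_perturbations ::
  "'w measure \<Rightarrow> (real \<Rightarrow> 'w \<Rightarrow> real^'p) \<Rightarrow> real \<Rightarrow> nat \<Rightarrow> real
     \<Rightarrow> (nat \<Rightarrow> 'w \<Rightarrow> real^'d) set" where
  "grid_perturbations M B T N \<epsilon> =
     {e. \<forall>i<N. (\<forall>\<omega>\<in>space M. norm (e i \<omega>) \<le> \<epsilon>) \<and>
                e i \<in> borel_measurable (BM_filtration M B (grid_time T N i))}"

text \<open>Perturbed Euler--Maruyama scheme started at time t_n from x:
  euler_scheme ... n a e x k \<omega> is the state at time t_{n+k}.\<close>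
primrec euler_scheme ::
  "(real \<Rightarrow> real^'d \<Rightarrow> 'c \<Rightarrow> real^'d) \<Rightarrow> (real \<Rightarrow> real^'d \<Rightarrow> 'c \<Rightarrow> real^'p^'d)
   \<Rightarrow> (real \<Rightarrow> 'w \<Rightarrow> real^'p) \<Rightarrow> real \<Rightarrow> nat \<Rightarrow> nat
   \<Rightarrow> (nat \<Rightarrow> 'w \<Rightarrow> 'c) \<Rightarrow> (nat \<Rightarrow> 'w \<Rightarrow> real^'d) \<Rightarrow> real^'d \<Rightarrow> nat \<Rightarrow> 'w \<Rightarrow> real^'d" where
  "euler_scheme \<mu> \<sigma> B T N n a e x 0 \<omega> = x"
| "euler_scheme \<mu> \<sigma> B T N n a e x (Suc k) \<omega> =
     (let i = n + k; X = euler_scheme \<mu> \<sigma> B T N n a e x k \<omega> in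
        X + (T / real N) *\<^sub>R \<mu> (grid_time T N i) (X + e i \<omega>) (a i \<omega>)
          + \<sigma> (grid_time T N i) (X + e i \<omega>) (a i \<omega>)
              *v (B (grid_time T N (Suc i)) \<omega> - B (grid_time T N i) \<omega>))"

definition v_eps ::
  "'w measure \<Rightarrow> (real \<Rightarrow> 'w \<Rightarrow> real^'p) \<Rightarrow> (real \<Rightarrow> real^'d \<Rightarrow> 'c::topological_space \<Rightarrow> real^'d)
   \<Rightarrow> (real \<Rightarrow> real^'d \<Rightarrow> 'c \<Rightarrow> real^'p^'d) \<Rightarrow> 'c set \<Rightarrow> (real^'d \<Rightarrow> real) \<Rightarrow> real \<Rightarrow> nat
   \<Rightarrow> real \<Rightarrow> nat \<Rightarrow> real^'d \<Rightarrow> real" where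
  "v_eps M B \<mu> \<sigma> A \<psi> T N \<epsilon> n x =
     (SUP ae \<in> grid_controls M B T N A \<times> grid_perturbations M B T N \<epsilon>.
        (\<integral>\<omega>. \<psi> (euler_scheme \<mu> \<sigma> B T N n (fst ae) (snd ae) x (N - n) \<omega>) \<partial>M))"

definition v_tilde ::
  "'w measure \<Rightarrow> (real \<Rightarrow> 'w \<Rightarrow> real^'p) \<Rightarrow> (real \<Rightarrow> real^'d \<Rightarrow> 'c::topological_space \<Rightarrow> real^'d)
   \<Rightarrow> (real \<Rightarrow> real^'d \<Rightarrow> 'c \<Rightarrow> real^'p^'d) \<Rightarrow> 'c set \<Rightarrow> (real^'d \<Rightarrow> real) \<Rightarrow> real \<Rightarrow> nat
   \<Rightarrow> nat \<Rightarrow> real^'d \<Rightarrow> real" where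
  "v_tilde M B \<mu> \<sigma> A \<psi> T N n x =
     (SUP a \<in> grid_controls M B T N A.
        (\<integral>\<omega>. \<psi> (euler_scheme \<mu> \<sigma> B T N n a (\<lambda>_ _. 0) x (N - n) \<omega>) \<partial>M))"

end

theory Submission
  imports Defs
begin

(* Fix a control and two perturbation sequences that differ by at most \<delta>, and let D be the
   difference of the two Euler--Maruyama chains. Over one grid step of length h, D changes by a
   drift term, bounded through the Lipschitz constant K of the coefficients, plus a matrix times
   the Brownian increment. That increment is independent of the past sigma-algebra, has mean zero
   and second moment p h, so the cross term vanishes in E|D|^2 and
     E|D_{k+1}|^2 + \<delta>^2 \<le> (1 + h r) (E|D_k|^2 + \<delta>^2)
   for a rate r depending only on K, T and p. Iterating over at most N = T/h steps yields
   exp (r T) (|x - y|^2 + \<delta>^2), uniformly in h. As \<psi> is L-Lipschitz, the expected payoffs then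
   differ by at most L exp (r T / 2) sqrt (|x - y|^2 + \<delta>^2). Taking \<delta> = 0 gives the Lipschitz
   bound for v^eps; taking x = y and pairing each control with the zero perturbation gives the
   distance between v~ and v^eps. Both estimates pass to the suprema. *)

section \<open>Suprema of real families\<close>

lemma Sup_real_not_bdd_above:
  fixes X :: "real set"
  assumes "\<not> bdd_above X"
  shows "Sup X = (LEAST z::real. False)"
proof -
  have "(\<lambda>z::real. \<forall>x\<in>X. x \<le> z) = (\<lambda>z. False)"
    using assms by (auto simp: bdd_above_def fun_eq_iff)
  then show ?thesis
    unfolding Sup_real_def by simp
qed

lemma cSUP_le_cSUP_plus:
  fixes f :: "'i \<Rightarrow> real" and g :: "'j \<Rightarrow> real"
  assumes "I \<noteq> {}" and "bdd_above (g ` J)" and "\<And>i. i \<in> I \<Longrightarrow> \<exists>j\<in>J. f i \<le> g j + c"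
  shows "(SUP i\<in>I. f i) \<le> (SUP j\<in>J. g j) + c"
proof (rule cSUP_least[OF assms(1)])
  fix i assume "i \<in> I"
  then obtain j where "j \<in> J" "f i \<le> g j + c"
    using assms(3) by blast
  then show "f i \<le> (SUP j\<in>J. g j) + c"
    using cSUP_upper[OF \<open>j \<in> J\<close> assms(2)] by linarith
qed

lemma bdd_above_image_le_plus:
  fixes f :: "'i \<Rightarrow> real" and g :: "'j \<Rightarrow> real"
  assumes "bdd_above (g ` J)" and "\<And>i. i \<in> I \<Longrightarrow> \<exists>j\<in>J. f i \<le> g j + c"
  shows "bdd_above (f ` I)"
proof -
  obtain b where "\<forall>j\<in>J. g j \<le> b"
    using assms(1) by (auto simp: bdd_above_def)
  then have "\<forall>i\<in>I. f i \<le> b + c"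
    using assms(2) by force
  then show ?thesis
    by (auto simp: bdd_above_def)
qed

text \<open>If neither family is bounded above, both suprema are the same junk value of
  \<^const>\<open>Sup\<close> on \<^typ>\<open>real\<close>.\<close>

lemma cSUP_abs_diff_le:
  fixes f :: "'i \<Rightarrow> real" and g :: "'j \<Rightarrow> real"
  assumes "0 \<le> c"
    and fg: "\<And>i. i \<in> I \<Longrightarrow> \<exists>j\<in>J. \<bar>f i - g j\<bar> \<le> c"
    and gf: "\<And>j. j \<in> J \<Longrightarrow> \<exists>i\<in>I. \<bar>f i - g j\<bar> \<le> c"
  shows "\<bar>(SUP i\<in>I. f i) - (SUP j\<in>J. g j)\<bar> \<le> c"
proof (cases "I = {}")
  case True
  then have "J = {}"
    using gf by auto
  with True \<open>0 \<le> c\<close> show ?thesis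
    by simp
next
  case False
  then have "J \<noteq> {}"
    using fg by auto
  have fg': "\<exists>j\<in>J. f i \<le> g j + c" if "i \<in> I" for i
    using fg[OF that] by (force dest: abs_le_D1)
  have gf': "\<exists>i\<in>I. g j \<le> f i + c" if "j \<in> J" for j
    using gf[OF that] by (force dest: abs_le_D2)
  have bdd: "bdd_above (f ` I) \<longleftrightarrow> bdd_above (g ` J)"
  proof
    assume "bdd_above (f ` I)"
    then show "bdd_above (g ` J)"
      by (rule bdd_above_image_le_plus) (rule gf')
  next
    assume "bdd_above (g ` J)"
    then show "bdd_above (f ` I)"
      by (rule bdd_above_image_le_plus) (rule fg')
  qed
  show ?thesis
  proof (cases "bdd_above (f ` I)")
    case True
    have "(SUP i\<in>I. f i) \<le> (SUP j\<in>J. g j) + c"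
      by (rule cSUP_le_cSUP_plus[OF False]) (use True bdd fg' in auto)
    moreover have "(SUP j\<in>J. g j) \<le> (SUP i\<in>I. f i) + c"
      by (rule cSUP_le_cSUP_plus[OF \<open>J \<noteq> {}\<close> True]) (use gf' in auto)
    ultimately show ?thesis
      by linarith
  next
    case False
    then show ?thesis
      using bdd \<open>0 \<le> c\<close> by (simp add: Sup_real_not_bdd_above)
  qed
qed

lemma one_plus_power_le_exp:
  fixes x :: real
  assumes "0 \<le> x"
  shows "(1 + x) ^ k \<le> exp (real k * x)"
proof -
  have "(1 + x) ^ k \<le> exp x ^ k"
    using assms by (intro power_mono) (simp_all add: exp_ge_add_one_self add.commute)
  then show ?thesis
    by (simp add: exp_of_nat_mult)
qed

lemma power2_le_drift_step:
  fixes u r d h K :: real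
  assumes "0 \<le> r" "0 \<le> d" "0 \<le> h" "0 \<le> K" "0 \<le> u" "u \<le> r + h * K * (r + d)"
  shows "u\<^sup>2 \<le> r\<^sup>2 + h * (4 * K + 2 * h * K\<^sup>2) * (r\<^sup>2 + d\<^sup>2)"
proof -
  have sq: "(r + d)\<^sup>2 \<le> 2 * (r\<^sup>2 + d\<^sup>2)" and rd: "r * (r + d) \<le> (r + d)\<^sup>2"
    using sum_squares_bound[of r d] assms(1,2) by (simp_all add: power2_eq_square algebra_simps)
  have hK: "0 \<le> h * K"
    using assms(3,4) by simp
  have "u\<^sup>2 \<le> (r + h * K * (r + d))\<^sup>2"
    using assms by (intro power_mono) auto
  also have "\<dots> = r\<^sup>2 + 2 * (h * K) * (r * (r + d)) + (h * K)\<^sup>2 * (r + d)\<^sup>2"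
    by (simp add: power2_eq_square algebra_simps)
  also have "\<dots> \<le> r\<^sup>2 + 2 * (h * K) * (r + d)\<^sup>2 + (h * K)\<^sup>2 * (r + d)\<^sup>2"
    using mult_left_mono[OF rd, of "2 * (h * K)"] hK by simp
  also have "\<dots> = r\<^sup>2 + h * (2 * K + h * K\<^sup>2) * (r + d)\<^sup>2"
    by (simp add: power2_eq_square algebra_simps)
  also have "\<dots> \<le> r\<^sup>2 + h * (2 * K + h * K\<^sup>2) * (2 * (r\<^sup>2 + d\<^sup>2))"
    using assms(3,4) by (intro add_left_mono mult_left_mono sq) auto
  finally show ?thesis
    by (simp add: algebra_simps)
qed

lemma power2_le_diffusion_step:
  fixes u r d K :: real
  assumes "0 \<le> K" "0 \<le> u" "u \<le> K * (r + d)"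
  shows "u\<^sup>2 \<le> 2 * K\<^sup>2 * (r\<^sup>2 + d\<^sup>2)"
proof -
  have "u\<^sup>2 \<le> K\<^sup>2 * (r + d)\<^sup>2"
    using assms power_mono[OF assms(3), of 2] by (simp add: power_mult_distrib)
  also have "\<dots> \<le> K\<^sup>2 * (2 * (r\<^sup>2 + d\<^sup>2))"
    using sum_squares_bound[of r d] by (intro mult_left_mono) (simp_all add: power2_eq_square algebra_simps)
  finally show ?thesis
    by (simp add: algebra_simps)
qed

lemma norm_vec_power2: "(norm (z :: real^'n))\<^sup>2 = (\<Sum>i\<in>UNIV. (z $ i)\<^sup>2)"
  by (simp add: norm_vec_def L2_set_def sum_nonneg)

lemma norm_matrix_vector_mult_le:
  fixes S :: "real^'n^'m" and x :: "real^'n"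
  shows "norm (S *v x) \<le> norm S * norm x"
proof -
  have "(norm (S *v x))\<^sup>2 = (\<Sum>j\<in>UNIV. (S $ j \<bullet> x)\<^sup>2)"
    by (simp add: norm_vec_power2 matrix_vector_mult_def inner_vec_def)
  also have "\<dots> \<le> (\<Sum>j\<in>UNIV. (norm (S $ j) * norm x)\<^sup>2)"
  proof (rule sum_mono)
    fix j
    show "(S $ j \<bullet> x)\<^sup>2 \<le> (norm (S $ j) * norm x)\<^sup>2"
      using power_mono[OF Cauchy_Schwarz_ineq2 abs_ge_zero, of "S $ j" x 2] by simp
  qed
  also have "\<dots> = (norm S * norm x)\<^sup>2"
    by (simp add: norm_vec_def L2_set_def sum_nonneg power_mult_distrib sum_distrib_right)
  finally show ?thesis
    by (rule power2_le_imp_le) simp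
qed

lemma lipschitz_constant_nonneg:
  fixes \<psi> :: "'a::euclidean_space \<Rightarrow> real"
  assumes "\<forall>x y. \<bar>\<psi> x - \<psi> y\<bar> \<le> L * norm (x - y)"
  shows "0 \<le> L"
proof -
  obtain b :: 'a where "b \<in> Basis"
    using nonempty_Basis by blast
  then show ?thesis
    using assms[rule_format, of b 0] by (simp add: norm_Basis order_trans[OF abs_ge_zero])
qed

lemma borel_measurable_vec_nth:
  "f \<in> borel_measurable M \<Longrightarrow> (\<lambda>x. (f x :: 'a::real_normed_vector^'n) $ i) \<in> borel_measurable M"
  by (rule borel_measurable_continuous_on[OF continuous_on_component]) (auto intro: continuous_on_id)

lemma borel_measurable_matrix_vector_mult [measurable]:
  fixes S :: "'a \<Rightarrow> real^'n^'m" and x :: "'a \<Rightarrow> real^'n"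
  assumes "S \<in> borel_measurable M" "x \<in> borel_measurable M"
  shows "(\<lambda>\<omega>. S \<omega> *v x \<omega>) \<in> borel_measurable M"
  using assms by (rule borel_measurable_continuous_Pair[where H="(*v)"])
    (simp add: matrix_vector_mult_def case_prod_unfold continuous_on_vec_lambda continuous_on_sum
      continuous_on_mult continuous_on_component continuous_on_fst continuous_on_snd continuous_on_id)

lemma borel_measurable_continuous_on_slice:
  fixes f :: "real \<Rightarrow> 'a::second_countable_topology \<Rightarrow> 'c::second_countable_topology \<Rightarrow> 'b::topological_space"
  assumes cont: "continuous_on ({0..T} \<times> UNIV \<times> A) (\<lambda>(t, x, a). f t x a)" and t: "t \<in> {0..T}"
    and X: "X \<in> borel_measurable N" and a: "a \<in> borel_measurable N" and aA: "\<forall>\<omega>\<in>space N. a \<omega> \<in> A"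
  shows "(\<lambda>\<omega>. f t (X \<omega>) (a \<omega>)) \<in> borel_measurable N"
proof -
  have "continuous_on (UNIV \<times> A) (\<lambda>z. (\<lambda>(t, x, a). f t x a) (t, fst z, snd z))"
    by (rule continuous_on_compose2[OF cont]) (use t in \<open>auto intro!: continuous_intros\<close>)
  then have "continuous_on (UNIV \<times> A) (\<lambda>(x, a). f t x a)"
    by (simp add: case_prod_unfold)
  then have f: "(\<lambda>(x, a). f t x a) \<in> borel_measurable (restrict_space borel (UNIV \<times> A))"
    by (rule borel_measurable_continuous_on_restrict)
  have "(\<lambda>\<omega>. (X \<omega>, a \<omega>)) \<in> measurable N (restrict_space borel (UNIV \<times> A))"
    using measurable_Pair[OF X a] aA by (auto simp: borel_prod measurable_restrict_space2_iff)
  from measurable_comp[OF this f] show ?thesis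
    by (simp add: comp_def)
qed

lemma integrable_real_bound:
  fixes f g :: "'a \<Rightarrow> real"
  assumes "integrable M g" "f \<in> borel_measurable M"
    and "\<And>x. x \<in> space M \<Longrightarrow> 0 \<le> f x" "\<And>x. x \<in> space M \<Longrightarrow> f x \<le> g x"
  shows "integrable M f"
proof (rule Bochner_Integration.integrable_bound[OF assms(1,2)])
  show "AE x in M. norm (f x) \<le> norm (g x)"
    using assms(3,4) by (intro AE_I2) (metis abs_of_nonneg order_trans real_norm_def)
qed

lemma (in finite_measure) integrable_vec_nth_of_square_norm:
  fixes Z :: "'a \<Rightarrow> real^'n"
  assumes "integrable M (\<lambda>x. (norm (Z x))\<^sup>2)" "Z \<in> borel_measurable M"
  shows "integrable M (\<lambda>x. Z x $ k)"
proof (rule square_integrable_imp_integrable)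
  show [measurable]: "(\<lambda>x. Z x $ k) \<in> borel_measurable M"
    using assms(2) by (rule borel_measurable_vec_nth)
  have "(Z x $ k)\<^sup>2 \<le> (norm (Z x))\<^sup>2" for x
    using component_le_norm_cart[of "Z x" k] abs_le_square_iff by fastforce
  then show "integrable M (\<lambda>x. (Z x $ k)\<^sup>2)"
    by (intro integrable_real_bound[OF assms(1)]) auto
qed

lemma (in prob_space) integral_le_of_second_moment_le:
  fixes f :: "'a \<Rightarrow> real"
  assumes f: "f \<in> borel_measurable M" "integrable M (\<lambda>x. (f x)\<^sup>2)"
    and b: "(\<integral>x. (f x)\<^sup>2 \<partial>M) \<le> b\<^sup>2" "0 \<le> b"
  shows "integrable M f" and "(\<integral>x. f x \<partial>M) \<le> b"
proof -
  show "integrable M f"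
    using f by (rule square_integrable_imp_integrable)
  then have "(\<integral>x. f x \<partial>M)\<^sup>2 \<le> (\<integral>x. (f x)\<^sup>2 \<partial>M)"
    using variance_eq[of f] variance_positive[of f] f(2) by linarith
  with b have "(\<integral>x. f x \<partial>M)\<^sup>2 \<le> b\<^sup>2"
    by linarith
  then show "(\<integral>x. f x \<partial>M) \<le> b"
    using b(2) by (rule power2_le_imp_le)
qed

lemma (in prob_space) integral_lipschitz_diff_le:
  fixes X Y :: "'a \<Rightarrow> 'b::{second_countable_topology, real_normed_vector}"
  assumes [measurable]: "X \<in> borel_measurable M" "Y \<in> borel_measurable M" "\<psi> \<in> borel_measurable borel"
    and \<psi>: "\<And>x y. \<bar>\<psi> x - \<psi> y\<bar> \<le> L * norm (x - y)" "0 \<le> L"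
    and XY: "integrable M (\<lambda>\<omega>. (norm (X \<omega> - Y \<omega>))\<^sup>2)" "(\<integral>\<omega>. (norm (X \<omega> - Y \<omega>))\<^sup>2 \<partial>M) \<le> b\<^sup>2" "0 \<le> b"
  shows "\<bar>(\<integral>\<omega>. \<psi> (X \<omega>) \<partial>M) - (\<integral>\<omega>. \<psi> (Y \<omega>) \<partial>M)\<bar> \<le> L * b"
proof -
  note L1 = integral_le_of_second_moment_le[of "\<lambda>\<omega>. norm (X \<omega> - Y \<omega>)", OF _ XY]
  have diff_int: "integrable M (\<lambda>\<omega>. \<psi> (X \<omega>) - \<psi> (Y \<omega>))"
  proof (rule Bochner_Integration.integrable_bound)
    show "integrable M (\<lambda>\<omega>. L * norm (X \<omega> - Y \<omega>))"
      using L1(1) by simp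
    show "AE \<omega> in M. norm (\<psi> (X \<omega>) - \<psi> (Y \<omega>)) \<le> norm (L * norm (X \<omega> - Y \<omega>))"
      using \<psi> by (intro AE_I2) (simp add: abs_mult)
  qed measurable
  have "\<bar>\<integral>\<omega>. \<psi> (X \<omega>) - \<psi> (Y \<omega>) \<partial>M\<bar> \<le> (\<integral>\<omega>. \<bar>\<psi> (X \<omega>) - \<psi> (Y \<omega>)\<bar> \<partial>M)"
    by (rule integral_abs_bound)
  also have "\<dots> \<le> (\<integral>\<omega>. L * norm (X \<omega> - Y \<omega>) \<partial>M)"
    using diff_int L1(1) \<psi>(1) by (intro integral_mono) auto
  also have "\<dots> \<le> L * b"
    using mult_left_mono[OF L1(2) \<psi>(2)] by simp
  finally have diff: "\<bar>\<integral>\<omega>. \<psi> (X \<omega>) - \<psi> (Y \<omega>) \<partial>M\<bar> \<le> L * b" .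
  show ?thesis
  proof (cases "integrable M (\<lambda>\<omega>. \<psi> (Y \<omega>))")
    case True
    then have "integrable M (\<lambda>\<omega>. \<psi> (X \<omega>))"
      using Bochner_Integration.integrable_add[OF diff_int True] by simp
    with True diff show ?thesis
      by simp
  next
    case False
    \<comment> \<open>then \<open>\<psi> \<circ> X\<close> is not integrable either, and both integrals are the junk value \<open>0\<close>\<close>
    have "\<not> integrable M (\<lambda>\<omega>. \<psi> (X \<omega>))"
    proof
      assume "integrable M (\<lambda>\<omega>. \<psi> (X \<omega>))"
      from Bochner_Integration.integrable_diff[OF this diff_int] False show False
        by simp
    qed
    with False show ?thesis
      using \<psi>(2) XY(3) by (simp add: not_integrable_integral_eq)
  qed
qed

section \<open>Gaussian vectors\<close>

lemma nn_integral_lborel_vec_prod: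
  fixes G :: "'n::finite \<Rightarrow> real \<Rightarrow> ennreal"
  assumes [measurable]: "\<And>i. G i \<in> borel_measurable borel"
  shows "(\<integral>\<^sup>+z. (\<Prod>i\<in>UNIV. G i (z $ i)) \<partial>(lborel :: (real^'n) measure)) = (\<Prod>i\<in>UNIV. \<integral>\<^sup>+x. G i x \<partial>lborel)"
proof -
  define H where "H b = G (SOME i. b = axis i 1)" for b :: "real^'n"
  have H_axis: "H (axis i 1) = G i" for i
    unfolding H_def by (rule arg_cong[where f=G], rule some_equality) (auto simp: axis_eq_axis)
  have Basis: "(Basis :: (real^'n) set) = (\<lambda>i. axis i 1) ` UNIV"
    by (auto simp: Basis_vec_def)
  have inj: "inj (\<lambda>i::'n. axis i (1::real))"
    by (auto simp: inj_def axis_eq_axis)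
  have "(\<integral>\<^sup>+z. (\<Prod>i\<in>UNIV. G i (z $ i)) \<partial>lborel)
      = (\<integral>\<^sup>+z. (\<Prod>b\<in>Basis. H b (z \<bullet> b)) \<partial>(lborel :: (real^'n) measure))"
    by (simp add: Basis prod.reindex[OF inj] H_axis inner_axis)
  also have "\<dots> = (\<Prod>b\<in>Basis. \<integral>\<^sup>+x. H b x \<partial>lborel)"
    by (rule nn_integral_lborel_prod) (auto simp: H_def)
  also have "\<dots> = (\<Prod>i\<in>UNIV. \<integral>\<^sup>+x. G i x \<partial>lborel)"
    by (simp add: Basis prod.reindex[OF inj] H_axis)
  finally show ?thesis .
qed

lemma lborel_distr_uminus_euclidean: "distr lborel borel uminus = (lborel :: 'a::euclidean_space measure)"
  using lborel_affine[of "-1" "0::'a"] by (simp add: density_1)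

lemma gaussian_vec_component_second_moment:
  fixes k :: "'n::finite"
  assumes "0 < \<sigma>"
  shows "has_bochner_integral lborel (\<lambda>z::real^'n. (\<Prod>i\<in>UNIV. normal_density 0 \<sigma> (z $ i)) * (z $ k)\<^sup>2) (\<sigma>\<^sup>2)"
proof (rule has_bochner_integral_nn_integral)
  define G where "G i x = ennreal (normal_density 0 \<sigma> x * (if i = k then x\<^sup>2 else 1))" for i x
  have [measurable]: "G i \<in> borel_measurable borel" for i
    unfolding G_def by measurable
  have "(\<integral>\<^sup>+x. G i x \<partial>lborel) = ennreal (if i = k then \<sigma>\<^sup>2 else 1)" for i
  proof -
    have "(\<integral>x. normal_density 0 \<sigma> x * x\<^sup>2 \<partial>lborel) = \<sigma>\<^sup>2"
      using integral_normal_moment_even[OF assms, of 0 1] by (simp add: power2_eq_square)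
    moreover have "integrable lborel (\<lambda>x. normal_density 0 \<sigma> x * (if i = k then x\<^sup>2 else 1))"
      using integrable_normal_moment[OF assms, of 0 2] integrable_normal_density[OF assms]
      by (cases "i = k") simp_all
    ultimately show ?thesis
      unfolding G_def using assms
      by (subst nn_integral_eq_integral) (auto simp: normal_density_nonneg)
  qed
  moreover have "ennreal ((\<Prod>i\<in>UNIV. normal_density 0 \<sigma> (z $ i)) * (z $ k)\<^sup>2) = (\<Prod>i\<in>UNIV. G i (z $ i))"
    for z :: "real^'n"
    by (simp add: G_def prod_ennreal normal_density_nonneg prod.distrib prod.delta)
  ultimately have "(\<integral>\<^sup>+z. ennreal ((\<Prod>i\<in>UNIV. normal_density 0 \<sigma> (z $ i)) * (z $ k)\<^sup>2) \<partial>lborel)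
      = (\<Prod>i\<in>UNIV. ennreal (if i = k then \<sigma>\<^sup>2 else 1))"
    by (simp add: nn_integral_lborel_vec_prod)
  also have "\<dots> = (\<Prod>i\<in>UNIV. if i = k then ennreal (\<sigma>\<^sup>2) else 1)"
    by (intro prod.cong) auto
  also have "\<dots> = ennreal (\<sigma>\<^sup>2)"
    by (simp add: prod.delta)
  finally show "(\<integral>\<^sup>+z. ennreal ((\<Prod>i\<in>UNIV. normal_density 0 \<sigma> (z $ i)) * (z $ k)\<^sup>2) \<partial>lborel) = ennreal (\<sigma>\<^sup>2)" .
qed (auto simp: normal_density_nonneg intro!: AE_I2 mult_nonneg_nonneg prod_nonneg)

lemma gaussian_vec_component_mean:
  fixes k :: "'n::finite"
  shows "(\<integral>z. (\<Prod>i\<in>UNIV. normal_density 0 \<sigma> (z $ i)) * z $ k \<partial>(lborel :: (real^'n) measure)) = 0"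
proof -
  define f where "f z = (\<Prod>i\<in>UNIV. normal_density 0 \<sigma> (z $ i))" for z :: "real^'n"
  have "(\<integral>z. f z * z $ k \<partial>lborel) = (\<integral>z. f z * z $ k \<partial>(distr lborel borel uminus))"
    by (simp add: lborel_distr_uminus_euclidean)
  also have "\<dots> = (\<integral>z. f (- z) * (- z) $ k \<partial>lborel)"
    unfolding f_def by (rule integral_distr) auto
  also have "\<dots> = - (\<integral>z. f z * z $ k \<partial>lborel)"
    by (simp add: f_def normal_density_def)
  finally show ?thesis
    by (simp add: f_def)
qed

lemma brownian_motion_prob_space: "brownian_motion M B \<Longrightarrow> prob_space M"
  by (simp add: brownian_motion_def)

lemma brownian_motion_measurable: "brownian_motion M B \<Longrightarrow> 0 \<le> t \<Longrightarrow> B t \<in> borel_measurable M"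
  by (simp add: brownian_motion_def)

lemma brownian_motion_zero: "brownian_motion M B \<Longrightarrow> \<omega> \<in> space M \<Longrightarrow> B 0 \<omega> = 0"
  by (simp add: brownian_motion_def)

lemma brownian_motion_increment_measurable:
  "brownian_motion M B \<Longrightarrow> 0 \<le> t \<Longrightarrow> t \<le> s \<Longrightarrow> (\<lambda>\<omega>. B s \<omega> - B t \<omega>) \<in> borel_measurable M"
  by (intro borel_measurable_diff brownian_motion_measurable) auto

lemma brownian_motion_indep_increments:
  "brownian_motion M B \<Longrightarrow> 0 \<le> u 0 \<Longrightarrow> (\<forall>i<k. u i < u (Suc i)) \<Longrightarrow>
     prob_space.indep_vars M (\<lambda>_. borel) (\<lambda>i \<omega>. B (u (Suc i)) \<omega> - B (u i) \<omega>) {..<k}"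
  by (simp add: brownian_motion_def)

lemma space_BM_filtration [simp]: "space (BM_filtration M B t) = space M"
  unfolding BM_filtration_def by (rule space_measure_of) auto

lemma sets_BM_filtration:
  "sets (BM_filtration M B t) =
     sigma_sets (space M) {B r -` S \<inter> space M | r S. r \<in> {0..t} \<and> S \<in> sets borel}"
  unfolding BM_filtration_def by (rule sets_measure_of) auto

lemma sets_BM_filtration_mono: "s \<le> t \<Longrightarrow> sets (BM_filtration M B s) \<subseteq> sets (BM_filtration M B t)"
  unfolding sets_BM_filtration by (rule sigma_sets_mono') (auto 0 3 dest: order_trans)

lemma measurable_BM_filtration_mono:
  "s \<le> t \<Longrightarrow> f \<in> measurable (BM_filtration M B s) N \<Longrightarrow> f \<in> measurable (BM_filtration M B t) N"
  using sets_BM_filtration_mono[of s t M B] unfolding measurable_def by auto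

lemma BM_filtration_adapted: "0 \<le> r \<Longrightarrow> r \<le> t \<Longrightarrow> B r \<in> borel_measurable (BM_filtration M B t)"
  by (rule measurableI) (auto simp: sets_BM_filtration intro!: sigma_sets.Basic)

lemma subalgebra_BM_filtration:
  assumes "brownian_motion M B"
  shows "subalgebra M (BM_filtration M B t)"
proof -
  have "{B r -` S \<inter> space M | r S. r \<in> {0..t} \<and> S \<in> sets borel} \<subseteq> sets M"
    using assms by (auto dest: brownian_motion_measurable intro!: measurable_sets)
  then show ?thesis
    unfolding subalgebra_def sets_BM_filtration by (simp add: sets.sigma_sets_subset)
qed

lemma measurable_from_BM_filtration:
  "brownian_motion M B \<Longrightarrow> f \<in> measurable (BM_filtration M B t) N \<Longrightarrow> f \<in> measurable M N"
  by (rule measurable_from_subalg[OF subalgebra_BM_filtration])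

section \<open>Independence of increments from the past\<close>

lemma partition_through_finite_set:
  fixes J :: "real set"
  assumes "finite J" "J \<subseteq> {0..t}" "0 \<le> t" "t < s"
  obtains u :: "nat \<Rightarrow> real" and m :: nat and idx :: "real \<Rightarrow> nat"
  where "u 0 = 0" "u m = t" "u (Suc m) = s" "\<forall>i<Suc m. u i < u (Suc i)"
    and "\<And>r. r \<in> J \<Longrightarrow> idx r \<le> m \<and> u (idx r) = r"
proof -
  define L where "L = sorted_list_of_set (insert 0 J \<inter> {..<t})"
  define m where "m = length L"
  define u where "u k = (L @ [t, s]) ! k" for k
  have L: "sorted_wrt (<) L" "set L = insert 0 J \<inter> {..<t}"
    using assms by (simp_all add: L_def)
  then have "sorted_wrt (<) (L @ [t, s])"
    using assms(4) by (auto simp: sorted_wrt_append)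
  then have u_strict: "\<forall>i<Suc m. u i < u (Suc i)"
    by (auto simp: u_def m_def sorted_wrt_iff_nth_less)
  have u_ends: "u m = t" "u (Suc m) = s"
    by (simp_all add: u_def m_def nth_append)
  have u_0: "u 0 = 0"
  proof (cases "t = 0")
    case True
    then have "L = []"
      using assms by (auto simp: L_def)
    then show ?thesis
      using True by (simp add: u_def)
  next
    case False
    then have "Min (insert 0 J \<inter> {..<t}) = 0"
      using assms by (intro Min_eqI) auto
    then show ?thesis
      using assms False by (simp add: u_def L_def sorted_list_of_set_nonempty)
  qed
  have "\<exists>k\<le>m. u k = r" if "r \<in> J" for r
  proof (cases "r = t")
    case False
    then have "r \<in> set L"
      using \<open>r \<in> J\<close> assms(2) L(2) by force
    then obtain k where "k < m" "L ! k = r"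
      by (auto simp: in_set_conv_nth m_def)
    then show ?thesis
      by (intro exI[of _ k]) (simp add: u_def m_def nth_append)
  qed (use u_ends in auto)
  then obtain idx where "\<And>r. r \<in> J \<Longrightarrow> idx r \<le> m \<and> u (idx r) = r"
    by metis
  with u_0 u_ends u_strict show ?thesis
    by (rule that)
qed

lemma brownian_motion_indep_increment_finite_past:
  fixes B :: "real \<Rightarrow> 'w \<Rightarrow> real^'p"
  assumes BM: "brownian_motion M B" and "0 \<le> t" "t < s" and J: "finite J" "J \<subseteq> {0..t}"
    and X: "\<forall>r\<in>J. X r \<in> sets borel" and S: "S \<in> sets borel"
  shows "measure M ({\<omega>\<in>space M. \<forall>r\<in>J. B r \<omega> \<in> X r} \<inter> {\<omega>\<in>space M. B s \<omega> - B t \<omega> \<in> S})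
       = measure M {\<omega>\<in>space M. \<forall>r\<in>J. B r \<omega> \<in> X r} * measure M {\<omega>\<in>space M. B s \<omega> - B t \<omega> \<in> S}"
proof -
  interpret prob_space M
    using BM by (rule brownian_motion_prob_space)
  \<comment> \<open>Each \<open>B r\<close> with \<open>r \<in> J\<close> telescopes into the first \<open>m\<close> increments, \<open>B s - B t\<close> is the last one.\<close>
  obtain u m idx where u_0: "u 0 = 0" and u_ends: "u m = t" "u (Suc m) = s"
    and u_strict: "\<forall>i<Suc m. u i < u (Suc i)" and idx: "\<And>r. r \<in> J \<Longrightarrow> idx r \<le> m \<and> u (idx r) = r"
    using partition_through_finite_set[OF J \<open>0 \<le> t\<close> \<open>t < s\<close>] by blast
  define I where "I l \<omega> = B (u (Suc l)) \<omega> - B (u l) \<omega>" for l \<omega>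
  define W where "W \<omega> = (\<lambda>l\<in>{..<m}. I l \<omega>)" for \<omega>
  define R where "R \<omega> = (\<lambda>l\<in>{m}. I l \<omega>)" for \<omega>
  define F where "F w = (\<lambda>r\<in>J. \<Sum>l<idx r. w l)" for w :: "nat \<Rightarrow> real^'p"
  have "indep_vars (\<lambda>_. borel) I {..<Suc m}"
    unfolding I_def using brownian_motion_indep_increments[OF BM] u_strict u_0 by simp
  then have indep: "indep_var (PiM {..<m} (\<lambda>_. borel)) W (PiM {m} (\<lambda>_. borel)) R"
    unfolding W_def R_def by (rule indep_var_restrict) auto
  have F_meas: "F \<in> measurable (PiM {..<m} (\<lambda>_. borel)) (PiM J (\<lambda>_. borel))"
    unfolding F_def using idx
    by (intro measurable_restrict borel_measurable_sum measurable_component_singleton)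
      (auto dest: order.strict_trans2)
  have B_telescope: "F (W \<omega>) r = B r \<omega>" if "\<omega> \<in> space M" "r \<in> J" for \<omega> r
  proof -
    have "F (W \<omega>) r = (\<Sum>l<idx r. B (u (Suc l)) \<omega> - B (u l) \<omega>)"
      using idx[OF \<open>r \<in> J\<close>] \<open>r \<in> J\<close> by (auto simp: F_def W_def I_def intro!: sum.cong)
    also have "\<dots> = B r \<omega>"
      using sum_lessThan_telescope[of "\<lambda>l. B (u l) \<omega>" "idx r"] idx[OF \<open>r \<in> J\<close>] u_0
        brownian_motion_zero[OF BM \<open>\<omega> \<in> space M\<close>] by simp
    finally show ?thesis .
  qed
  define Xa where "Xa = F -` PiE J X \<inter> space (PiM {..<m} (\<lambda>_. borel :: (real^'p) measure))"
  define Xb where "Xb = (\<lambda>w. w m) -` S \<inter> space (PiM {m} (\<lambda>_. borel :: (real^'p) measure))"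
  have Xa: "Xa \<in> sets (PiM {..<m} (\<lambda>_. borel))"
    unfolding Xa_def using J X by (intro measurable_sets[OF F_meas] sets_PiM_I_finite) auto
  have Xb: "Xb \<in> sets (PiM {m} (\<lambda>_. borel))"
    unfolding Xb_def using S by (intro measurable_sets[OF measurable_component_singleton]) auto
  have W_Xa: "W -` Xa \<inter> space M = {\<omega>\<in>space M. \<forall>r\<in>J. B r \<omega> \<in> X r}"
  proof -
    have "F w \<in> PiE J X \<longleftrightarrow> (\<forall>r\<in>J. F w r \<in> X r)" for w
      by (simp add: F_def Pi_iff)
    moreover have "W \<omega> \<in> space (PiM {..<m} (\<lambda>_. borel))" for \<omega>
      by (simp add: W_def space_PiM)
    ultimately show ?thesis
      using B_telescope by (auto simp: Xa_def)
  qed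
  have R_Xb: "R -` Xb \<inter> space M = {\<omega>\<in>space M. B s \<omega> - B t \<omega> \<in> S}"
    using u_ends by (auto simp: Xb_def R_def I_def space_PiM)
  have "(\<lambda>\<omega>. (W \<omega>, R \<omega>)) -` (Xa \<times> Xb) \<inter> space M = (W -` Xa \<inter> space M) \<inter> (R -` Xb \<inter> space M)"
    by auto
  then show ?thesis
    using indep_varD[OF indep Xa Xb] unfolding W_Xa R_Xb by simp
qed

definition finite_cylinders :: "'w set \<Rightarrow> (real \<Rightarrow> 'w \<Rightarrow> 'b::topological_space) \<Rightarrow> real set \<Rightarrow> 'w set set" where
  "finite_cylinders \<Omega> B I =
     {{\<omega>\<in>\<Omega>. \<forall>r\<in>J. B r \<omega> \<in> X r} | J X. finite J \<and> J \<subseteq> I \<and> (\<forall>r\<in>J. X r \<in> sets borel)}"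

lemma Int_stable_finite_cylinders: "Int_stable (finite_cylinders \<Omega> B I)"
proof (rule Int_stableI)
  fix E F assume "E \<in> finite_cylinders \<Omega> B I" "F \<in> finite_cylinders \<Omega> B I"
  then obtain J1 X1 J2 X2 where E: "E = {\<omega>\<in>\<Omega>. \<forall>r\<in>J1. B r \<omega> \<in> X1 r}" "finite J1" "J1 \<subseteq> I"
    "\<forall>r\<in>J1. X1 r \<in> sets borel" and F: "F = {\<omega>\<in>\<Omega>. \<forall>r\<in>J2. B r \<omega> \<in> X2 r}" "finite J2"
    "J2 \<subseteq> I" "\<forall>r\<in>J2. X2 r \<in> sets borel"
    unfolding finite_cylinders_def by blast
  define X where "X r = (if r \<in> J1 then X1 r else UNIV) \<inter> (if r \<in> J2 then X2 r else UNIV)" for r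
  have "(\<forall>r\<in>J1 \<union> J2. B r \<omega> \<in> X r) \<longleftrightarrow> (\<forall>r\<in>J1. B r \<omega> \<in> X1 r) \<and> (\<forall>r\<in>J2. B r \<omega> \<in> X2 r)" for \<omega>
    unfolding X_def by auto
  then have "E \<inter> F = {\<omega>\<in>\<Omega>. \<forall>r\<in>J1 \<union> J2. B r \<omega> \<in> X r}"
    unfolding E(1) F(1) by blast
  moreover have "\<forall>r\<in>J1 \<union> J2. X r \<in> sets borel"
    using E F by (auto simp: X_def)
  ultimately show "E \<inter> F \<in> finite_cylinders \<Omega> B I"
    unfolding finite_cylinders_def using E(2,3) F(2,3)
    by (intro CollectI exI[of _ "J1 \<union> J2"] exI[of _ X]) simp
qed

lemma finite_cylinders_subset_events:
  assumes BM: "brownian_motion M B" and "I \<subseteq> {0..}"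
  shows "finite_cylinders (space M) B I \<subseteq> sets M"
proof
  fix E assume "E \<in> finite_cylinders (space M) B I"
  then obtain J X where E: "E = {\<omega>\<in>space M. \<forall>r\<in>J. B r \<omega> \<in> X r}" and J: "finite J" "J \<subseteq> I"
    and X: "\<forall>r\<in>J. X r \<in> sets borel"
    unfolding finite_cylinders_def by blast
  have "{\<omega>\<in>space M. B r \<omega> \<in> X r} \<in> sets M" if "r \<in> J" for r
    using measurable_sets[OF brownian_motion_measurable[OF BM], of r "X r"] that X J assms(2)
    by (auto simp: vimage_def Int_def conj_commute)
  then show "E \<in> sets M"
    unfolding E by (intro sets.sets_Collect_finite_All J(1))
qed

lemma sets_BM_filtration_subset_finite_cylinders:
  fixes B :: "real \<Rightarrow> 'w \<Rightarrow> real^'p"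
  shows "sets (BM_filtration M B t) \<subseteq> sigma_sets (space M) (finite_cylinders (space M) B {0..t})"
  unfolding sets_BM_filtration
proof (rule sigma_sets_mono', safe)
  fix r and S :: "(real^'p) set" assume "r \<in> {0..t}" "S \<in> sets borel"
  then have "{\<omega>\<in>space M. \<forall>r'\<in>{r}. B r' \<omega> \<in> S} \<in> finite_cylinders (space M) B {0..t}"
    unfolding finite_cylinders_def by (intro CollectI exI[of _ "{r}"] exI[of _ "\<lambda>_. S"]) simp
  then show "B r -` S \<inter> space M \<in> finite_cylinders (space M) B {0..t}"
    by (simp add: vimage_def Int_def conj_commute)
qed

lemma brownian_motion_indep_filtration_increment:
  fixes B :: "real \<Rightarrow> 'w \<Rightarrow> real^'p"
  assumes BM: "brownian_motion M B" and t: "0 \<le> t" "t < s"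
  shows "prob_space.indep_set M (sets (BM_filtration M B t))
           (sigma_sets (space M) {(\<lambda>\<omega>. B s \<omega> - B t \<omega>) -` S \<inter> space M | S. S \<in> sets borel})"
proof -
  interpret prob_space M
    using BM by (rule brownian_motion_prob_space)
  define G where "G = finite_cylinders (space M) B {0..t}"
  define H where "H = {(\<lambda>\<omega>. B s \<omega> - B t \<omega>) -` S \<inter> space M | S. S \<in> sets (borel :: (real^'p) measure)}"
  have H_events: "H \<subseteq> events"
    unfolding H_def using brownian_motion_increment_measurable[OF BM t(1) less_imp_le[OF t(2)]]
    by (auto intro: measurable_sets)
  have "indep_set G H"
    unfolding indep_sets2_eq
  proof (intro conjI H_events ballI)
    show "G \<subseteq> events"
      unfolding G_def using BM by (rule finite_cylinders_subset_events) auto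
    fix E F assume "E \<in> G" "F \<in> H"
    then obtain J X S where E: "E = {\<omega>\<in>space M. \<forall>r\<in>J. B r \<omega> \<in> X r}" and J: "finite J" "J \<subseteq> {0..t}"
      and X: "\<forall>r\<in>J. X r \<in> sets borel" and F: "F = (\<lambda>\<omega>. B s \<omega> - B t \<omega>) -` S \<inter> space M"
      and S: "S \<in> sets borel"
      unfolding G_def H_def finite_cylinders_def by blast
    have F': "F = {\<omega>\<in>space M. B s \<omega> - B t \<omega> \<in> S}"
      using F by blast
    show "prob (E \<inter> F) = prob E * prob F"
      unfolding E F' by (rule brownian_motion_indep_increment_finite_past[OF BM t J X S])
  qed
  moreover have "Int_stable H"
  proof (rule Int_stableI)
    fix E F assume "E \<in> H" "F \<in> H"
    then obtain S1 S2 where "E = (\<lambda>\<omega>. B s \<omega> - B t \<omega>) -` S1 \<inter> space M" "S1 \<in> sets borel"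
      "F = (\<lambda>\<omega>. B s \<omega> - B t \<omega>) -` S2 \<inter> space M" "S2 \<in> sets borel"
      unfolding H_def by blast
    then show "E \<inter> F \<in> H"
      unfolding H_def by (intro CollectI exI[of _ "S1 \<inter> S2"]) auto
  qed
  ultimately have indep: "indep_set (sigma_sets (space M) G) (sigma_sets (space M) H)"
    using Int_stable_finite_cylinders unfolding G_def by (intro indep_set_sigma_sets)
  show ?thesis
    unfolding indep_set_def using sets_BM_filtration_subset_finite_cylinders[of M B t]
    by (intro indep_sets_mono_sets[OF indep[unfolded indep_set_def G_def H_def]]) (auto split: bool.split)
qed

lemma brownian_motion_indep_var_filtration_increment:
  fixes B :: "real \<Rightarrow> 'w \<Rightarrow> real^'p" and Z :: "'w \<Rightarrow> 'b::topological_space"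
  assumes BM: "brownian_motion M B" and t: "0 \<le> t" "t < s"
    and Z: "Z \<in> borel_measurable (BM_filtration M B t)" and g: "g \<in> borel_measurable borel"
  shows "prob_space.indep_var M borel Z borel (\<lambda>\<omega>. g (B s \<omega> - B t \<omega>))"
proof -
  interpret prob_space M
    using BM by (rule brownian_motion_prob_space)
  have \<Delta>: "(\<lambda>\<omega>. B s \<omega> - B t \<omega>) \<in> borel_measurable M"
    using brownian_motion_increment_measurable[OF BM t(1) less_imp_le[OF t(2)]] .
  have "sigma_sets (space M) {Z -` A \<inter> space M | A. A \<in> sets borel} \<subseteq> sets (BM_filtration M B t)"
    using measurable_sets[OF Z] sets.top[of "BM_filtration M B t"] by (intro sets.sigma_sets_subset') auto
  moreover have "sigma_sets (space M) {(\<lambda>\<omega>. g (B s \<omega> - B t \<omega>)) -` A \<inter> space M | A. A \<in> sets borel}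
      \<subseteq> sigma_sets (space M) {(\<lambda>\<omega>. B s \<omega> - B t \<omega>) -` S \<inter> space M | S. S \<in> sets borel}"
  proof (rule sigma_sets_mono', safe)
    fix A :: "'b set" assume "A \<in> sets borel"
    then show "\<exists>S. (\<lambda>\<omega>. g (B s \<omega> - B t \<omega>)) -` A \<inter> space M = (\<lambda>\<omega>. B s \<omega> - B t \<omega>) -` S \<inter> space M
        \<and> S \<in> sets borel"
      using measurable_sets[OF g] by (intro exI[of _ "g -` A"]) auto
  qed
  ultimately show ?thesis
    unfolding indep_var_eq indep_set_def
    using measurable_from_BM_filtration[OF BM Z] measurable_compose[OF \<Delta> g]
    by (intro conjI indep_sets_mono_sets[OF brownian_motion_indep_filtration_increment[OF BM t,
          unfolded indep_set_def]]) (auto split: bool.split)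
qed

section \<open>Second moments of one Brownian step\<close>

lemma brownian_increment_moments:
  fixes B :: "real \<Rightarrow> 'w \<Rightarrow> real^'p"
  assumes BM: "brownian_motion M B" and t: "0 \<le> t" "t < s"
  shows "integrable M (\<lambda>\<omega>. (norm (B s \<omega> - B t \<omega>))\<^sup>2)"
    and "(\<integral>\<omega>. (norm (B s \<omega> - B t \<omega>))\<^sup>2 \<partial>M) = real CARD('p) * (s - t)"
    and "integrable M (\<lambda>\<omega>. (B s \<omega> - B t \<omega>) $ k)"
    and "(\<integral>\<omega>. (B s \<omega> - B t \<omega>) $ k \<partial>M) = 0"
proof -
  interpret prob_space M
    using BM by (rule brownian_motion_prob_space)
  have [measurable]: "B s \<in> borel_measurable M" "B t \<in> borel_measurable M"
    using t by (auto intro: brownian_motion_measurable[OF BM])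
  define \<sigma> where "\<sigma> = sqrt (s - t)"
  have \<sigma>: "0 < \<sigma>" "\<sigma>\<^sup>2 = s - t"
    using t by (simp_all add: \<sigma>_def)
  define f where "f z = (\<Prod>i\<in>UNIV. normal_density 0 \<sigma> (z $ i))" for z :: "real^'p"
  have f_nonneg: "0 \<le> f z" for z
    unfolding f_def by (intro prod_nonneg) (simp add: normal_density_nonneg)
  have [measurable]: "f \<in> borel_measurable borel"
    unfolding f_def by measurable
  have D: "distributed M lborel (\<lambda>\<omega>. B s \<omega> - B t \<omega>) (\<lambda>z. ennreal (f z))"
    using BM t unfolding brownian_motion_def f_def \<sigma>_def by auto
  have "has_bochner_integral lborel (\<lambda>z. \<Sum>k\<in>UNIV. f z * (z $ k)\<^sup>2) (\<Sum>k\<in>(UNIV::'p set). \<sigma>\<^sup>2)"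
    unfolding f_def by (intro has_bochner_integral_sum gaussian_vec_component_second_moment \<sigma>(1))
  then have second: "has_bochner_integral lborel (\<lambda>z. f z * (norm z)\<^sup>2) (real CARD('p) * (s - t))"
    by (simp add: norm_vec_power2 sum_distrib_left \<sigma>(2))
  then show square_int: "integrable M (\<lambda>\<omega>. (norm (B s \<omega> - B t \<omega>))\<^sup>2)"
    using distributed_integrable[OF D, of "\<lambda>z. (norm z)\<^sup>2"] f_nonneg
    by (simp add: integrable.intros)
  show "(\<integral>\<omega>. (norm (B s \<omega> - B t \<omega>))\<^sup>2 \<partial>M) = real CARD('p) * (s - t)"
    using distributed_integral[OF D, of "\<lambda>z. (norm z)\<^sup>2"] f_nonneg
      has_bochner_integral_integral_eq[OF second] by simp
  show "integrable M (\<lambda>\<omega>. (B s \<omega> - B t \<omega>) $ k)"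
    using square_int by (rule integrable_vec_nth_of_square_norm) measurable
  show "(\<integral>\<omega>. (B s \<omega> - B t \<omega>) $ k \<partial>M) = 0"
    using distributed_integral[OF D, of "\<lambda>z. z $ k"] f_nonneg gaussian_vec_component_mean[of \<sigma> k]
    by (simp add: f_def)
qed

lemma brownian_increment_orthogonal_past:
  fixes B :: "real \<Rightarrow> 'w \<Rightarrow> real^'p" and Z :: "'w \<Rightarrow> real"
  assumes BM: "brownian_motion M B" and t: "0 \<le> t" "t < s"
    and Z: "Z \<in> borel_measurable (BM_filtration M B t)" "integrable M Z"
  shows "integrable M (\<lambda>\<omega>. Z \<omega> * (B s \<omega> - B t \<omega>) $ k)"
    and "(\<integral>\<omega>. Z \<omega> * (B s \<omega> - B t \<omega>) $ k \<partial>M) = 0"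
proof -
  interpret prob_space M
    using BM by (rule brownian_motion_prob_space)
  have indep: "indep_var borel Z borel (\<lambda>\<omega>. (B s \<omega> - B t \<omega>) $ k)"
    using borel_measurable_vec_nth[OF measurable_ident_sets[OF refl]]
    by (rule brownian_motion_indep_var_filtration_increment[OF BM t Z(1)])
  note moments = brownian_increment_moments[OF BM t]
  show "integrable M (\<lambda>\<omega>. Z \<omega> * (B s \<omega> - B t \<omega>) $ k)"
    using indep_var_integrable[OF indep Z(2) moments(3)] .
  show "(\<integral>\<omega>. Z \<omega> * (B s \<omega> - B t \<omega>) $ k \<partial>M) = 0"
    using indep_var_lebesgue_integral[OF indep Z(2) moments(3)] moments(4) by simp
qed

lemma brownian_increment_second_moment_past:
  fixes B :: "real \<Rightarrow> 'w \<Rightarrow> real^'p" and Z :: "'w \<Rightarrow> real"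
  assumes BM: "brownian_motion M B" and t: "0 \<le> t" "t < s"
    and Z: "Z \<in> borel_measurable (BM_filtration M B t)" "integrable M Z"
  shows "integrable M (\<lambda>\<omega>. Z \<omega> * (norm (B s \<omega> - B t \<omega>))\<^sup>2)"
    and "(\<integral>\<omega>. Z \<omega> * (norm (B s \<omega> - B t \<omega>))\<^sup>2 \<partial>M) = (\<integral>\<omega>. Z \<omega> \<partial>M) * (real CARD('p) * (s - t))"
proof -
  interpret prob_space M
    using BM by (rule brownian_motion_prob_space)
  have indep: "indep_var borel Z borel (\<lambda>\<omega>. (norm (B s \<omega> - B t \<omega>))\<^sup>2)"
    by (rule brownian_motion_indep_var_filtration_increment[OF BM t Z(1)]) measurable
  note moments = brownian_increment_moments[OF BM t]
  show "integrable M (\<lambda>\<omega>. Z \<omega> * (norm (B s \<omega> - B t \<omega>))\<^sup>2)"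
    using indep_var_integrable[OF indep Z(2) moments(1)] .
  show "(\<integral>\<omega>. Z \<omega> * (norm (B s \<omega> - B t \<omega>))\<^sup>2 \<partial>M) = (\<integral>\<omega>. Z \<omega> \<partial>M) * (real CARD('p) * (s - t))"
    using indep_var_lebesgue_integral[OF indep Z(2) moments(1)] moments(2) by simp
qed

lemma brownian_matrix_increment_second_moment:
  fixes B :: "real \<Rightarrow> 'w \<Rightarrow> real^'p" and S :: "'w \<Rightarrow> real^'p^'d"
  assumes BM: "brownian_motion M B" and t: "0 \<le> t" "t < s"
    and S: "S \<in> borel_measurable (BM_filtration M B t)" "integrable M (\<lambda>\<omega>. (norm (S \<omega>))\<^sup>2)"
  shows "integrable M (\<lambda>\<omega>. (norm (S \<omega> *v (B s \<omega> - B t \<omega>)))\<^sup>2)"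
    and "(\<integral>\<omega>. (norm (S \<omega> *v (B s \<omega> - B t \<omega>)))\<^sup>2 \<partial>M)
           \<le> real CARD('p) * (s - t) * (\<integral>\<omega>. (norm (S \<omega>))\<^sup>2 \<partial>M)"
proof -
  define \<Delta> where "\<Delta> \<omega> = B s \<omega> - B t \<omega>" for \<omega>
  have [measurable]: "S \<in> borel_measurable M" "\<Delta> \<in> borel_measurable M"
    using measurable_from_BM_filtration[OF BM S(1)]
      brownian_motion_increment_measurable[OF BM t(1) less_imp_le[OF t(2)]]
    by (auto simp: \<Delta>_def[abs_def])
  have "(\<lambda>\<omega>. (norm (S \<omega>))\<^sup>2) \<in> borel_measurable (BM_filtration M B t)"
    using S(1) by measurable
  note S\<Delta> = brownian_increment_second_moment_past[OF BM t this S(2), folded \<Delta>_def]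
  have le: "(norm (S \<omega> *v \<Delta> \<omega>))\<^sup>2 \<le> (norm (S \<omega>))\<^sup>2 * (norm (\<Delta> \<omega>))\<^sup>2" for \<omega>
    using power_mono[OF norm_matrix_vector_mult_le norm_ge_zero, of "S \<omega>" "\<Delta> \<omega>" 2]
    by (simp add: power_mult_distrib)
  have "integrable M (\<lambda>\<omega>. (norm (S \<omega> *v \<Delta> \<omega>))\<^sup>2)"
    by (rule integrable_real_bound[OF S\<Delta>(1) _ _ le]) auto
  with integral_mono[OF _ S\<Delta>(1) le] S\<Delta>(2)
  show "integrable M (\<lambda>\<omega>. (norm (S \<omega> *v (B s \<omega> - B t \<omega>)))\<^sup>2)"
    and "(\<integral>\<omega>. (norm (S \<omega> *v (B s \<omega> - B t \<omega>)))\<^sup>2 \<partial>M)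
           \<le> real CARD('p) * (s - t) * (\<integral>\<omega>. (norm (S \<omega>))\<^sup>2 \<partial>M)"
    by (simp_all add: \<Delta>_def mult.commute)
qed

lemma brownian_cross_term_mean_zero:
  fixes B :: "real \<Rightarrow> 'w \<Rightarrow> real^'p" and U :: "'w \<Rightarrow> real^'d" and S :: "'w \<Rightarrow> real^'p^'d"
  assumes BM: "brownian_motion M B" and t: "0 \<le> t" "t < s"
    and U: "U \<in> borel_measurable (BM_filtration M B t)" "integrable M (\<lambda>\<omega>. (norm (U \<omega>))\<^sup>2)"
    and S: "S \<in> borel_measurable (BM_filtration M B t)" "integrable M (\<lambda>\<omega>. (norm (S \<omega>))\<^sup>2)"
  shows "integrable M (\<lambda>\<omega>. U \<omega> \<bullet> (S \<omega> *v (B s \<omega> - B t \<omega>)))"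
    and "(\<integral>\<omega>. U \<omega> \<bullet> (S \<omega> *v (B s \<omega> - B t \<omega>)) \<partial>M) = 0"
proof -
  define Z where "Z j k \<omega> = U \<omega> $ j * S \<omega> $ j $ k" for j k \<omega>
  have Z_meas: "Z j k \<in> borel_measurable (BM_filtration M B t)" for j k
    unfolding Z_def[abs_def] using U(1) S(1)
    by (intro borel_measurable_times borel_measurable_vec_nth) auto
  have Z_int: "integrable M (Z j k)" for j k
  proof (rule Bochner_Integration.integrable_bound)
    show "integrable M (\<lambda>\<omega>. (norm (U \<omega>))\<^sup>2 + (norm (S \<omega>))\<^sup>2)"
      using U(2) S(2) by simp
    show "AE \<omega> in M. norm (Z j k \<omega>) \<le> norm ((norm (U \<omega>))\<^sup>2 + (norm (S \<omega>))\<^sup>2)"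
    proof (intro AE_I2)
      fix \<omega>
      have "\<bar>S \<omega> $ j $ k\<bar> \<le> norm (S \<omega>)"
        using component_le_norm_cart[of "S \<omega> $ j" k] Finite_Cartesian_Product.norm_nth_le[of "S \<omega>" j]
        by linarith
      then have "norm (Z j k \<omega>) \<le> norm (U \<omega>) * norm (S \<omega>)"
        unfolding Z_def real_norm_def abs_mult by (intro mult_mono component_le_norm_cart) auto
      also have "\<dots> \<le> (norm (U \<omega>))\<^sup>2 + (norm (S \<omega>))\<^sup>2"
        using sum_squares_bound[of "norm (U \<omega>)" "norm (S \<omega>)"]
          mult_nonneg_nonneg[OF norm_ge_zero norm_ge_zero, of "U \<omega>" "S \<omega>"] by linarith
      finally show "norm (Z j k \<omega>) \<le> norm ((norm (U \<omega>))\<^sup>2 + (norm (S \<omega>))\<^sup>2)"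
        by simp
    qed
  qed (use measurable_from_BM_filtration[OF BM Z_meas] in auto)
  note orthogonal = brownian_increment_orthogonal_past[OF BM t Z_meas Z_int]
  have "U \<omega> \<bullet> (S \<omega> *v (B s \<omega> - B t \<omega>)) = (\<Sum>j\<in>UNIV. \<Sum>k\<in>UNIV. Z j k \<omega> * (B s \<omega> - B t \<omega>) $ k)" for \<omega>
    by (simp add: Z_def inner_vec_def matrix_vector_mult_def sum_distrib_left mult.assoc)
  with orthogonal show "integrable M (\<lambda>\<omega>. U \<omega> \<bullet> (S \<omega> *v (B s \<omega> - B t \<omega>)))"
    and "(\<integral>\<omega>. U \<omega> \<bullet> (S \<omega> *v (B s \<omega> - B t \<omega>)) \<partial>M) = 0"
    by (simp_all add: Bochner_Integration.integral_sum)
qed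

lemma brownian_step_second_moment:
  fixes B :: "real \<Rightarrow> 'w \<Rightarrow> real^'p" and U :: "'w \<Rightarrow> real^'d" and S :: "'w \<Rightarrow> real^'p^'d"
  assumes BM: "brownian_motion M B" and t: "0 \<le> t" "t < s"
    and U: "U \<in> borel_measurable (BM_filtration M B t)" "integrable M (\<lambda>\<omega>. (norm (U \<omega>))\<^sup>2)"
    and S: "S \<in> borel_measurable (BM_filtration M B t)" "integrable M (\<lambda>\<omega>. (norm (S \<omega>))\<^sup>2)"
  shows "integrable M (\<lambda>\<omega>. (norm (U \<omega> + S \<omega> *v (B s \<omega> - B t \<omega>)))\<^sup>2)"
    and "(\<integral>\<omega>. (norm (U \<omega> + S \<omega> *v (B s \<omega> - B t \<omega>)))\<^sup>2 \<partial>M)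
           \<le> (\<integral>\<omega>. (norm (U \<omega>))\<^sup>2 \<partial>M) + real CARD('p) * (s - t) * (\<integral>\<omega>. (norm (S \<omega>))\<^sup>2 \<partial>M)"
proof -
  note cross = brownian_cross_term_mean_zero[OF BM t U S]
  note diffusion = brownian_matrix_increment_second_moment[OF BM t S]
  have expand: "(norm (u + v))\<^sup>2 = (norm u)\<^sup>2 + 2 * (u \<bullet> v) + (norm v)\<^sup>2" for u v :: "real^'d"
    by (simp add: power2_norm_eq_inner inner_add algebra_simps inner_commute)
  show "integrable M (\<lambda>\<omega>. (norm (U \<omega> + S \<omega> *v (B s \<omega> - B t \<omega>)))\<^sup>2)"
    using U(2) cross(1) diffusion(1) by (simp add: expand)
  show "(\<integral>\<omega>. (norm (U \<omega> + S \<omega> *v (B s \<omega> - B t \<omega>)))\<^sup>2 \<partial>M)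
      \<le> (\<integral>\<omega>. (norm (U \<omega>))\<^sup>2 \<partial>M) + real CARD('p) * (s - t) * (\<integral>\<omega>. (norm (S \<omega>))\<^sup>2 \<partial>M)"
    using U(2) cross diffusion by (simp add: expand)
qed

lemma brownian_step_second_moment_growth:
  fixes B :: "real \<Rightarrow> 'w \<Rightarrow> real^'p" and U D :: "'w \<Rightarrow> real^'d" and S :: "'w \<Rightarrow> real^'p^'d"
  assumes BM: "brownian_motion M B" and t: "0 \<le> t" "t < s"
    and U: "U \<in> borel_measurable (BM_filtration M B t)" and S: "S \<in> borel_measurable (BM_filtration M B t)"
    and D: "D \<in> borel_measurable M" "integrable M (\<lambda>\<omega>. (norm (D \<omega>))\<^sup>2)"
    and c: "0 \<le> c\<^sub>U" "0 \<le> c\<^sub>S"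
    and U_le: "\<And>\<omega>. \<omega> \<in> space M \<Longrightarrow> (norm (U \<omega>))\<^sup>2 \<le> (norm (D \<omega>))\<^sup>2 + c\<^sub>U * ((norm (D \<omega>))\<^sup>2 + \<delta>\<^sup>2)"
    and S_le: "\<And>\<omega>. \<omega> \<in> space M \<Longrightarrow> (norm (S \<omega>))\<^sup>2 \<le> c\<^sub>S * ((norm (D \<omega>))\<^sup>2 + \<delta>\<^sup>2)"
  shows "integrable M (\<lambda>\<omega>. (norm (U \<omega> + S \<omega> *v (B s \<omega> - B t \<omega>)))\<^sup>2)"
    and "(\<integral>\<omega>. (norm (U \<omega> + S \<omega> *v (B s \<omega> - B t \<omega>)))\<^sup>2 \<partial>M) + \<delta>\<^sup>2
           \<le> (1 + c\<^sub>U + real CARD('p) * (s - t) * c\<^sub>S) * ((\<integral>\<omega>. (norm (D \<omega>))\<^sup>2 \<partial>M) + \<delta>\<^sup>2)"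
proof -
  interpret prob_space M
    using BM by (rule brownian_motion_prob_space)
  have [measurable]: "U \<in> borel_measurable M" "S \<in> borel_measurable M"
    using measurable_from_BM_filtration[OF BM] U S by auto
  define ED where "ED = (\<integral>\<omega>. (norm (D \<omega>))\<^sup>2 \<partial>M)"
  have [measurable]: "D \<in> borel_measurable M"
    by (rule D(1))
  have U_int: "integrable M (\<lambda>\<omega>. (norm (U \<omega>))\<^sup>2)"
    by (rule integrable_real_bound[OF _ _ _ U_le]) (use D(2) in auto)
  have S_int: "integrable M (\<lambda>\<omega>. (norm (S \<omega>))\<^sup>2)"
    by (rule integrable_real_bound[OF _ _ _ S_le]) (use D(2) in auto)
  have "(\<integral>\<omega>. (norm (U \<omega>))\<^sup>2 \<partial>M) \<le> (\<integral>\<omega>. (norm (D \<omega>))\<^sup>2 + c\<^sub>U * ((norm (D \<omega>))\<^sup>2 + \<delta>\<^sup>2) \<partial>M)"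
    by (rule integral_mono[OF U_int _ U_le]) (use D(2) in auto)
  also have "\<dots> = ED + c\<^sub>U * (ED + \<delta>\<^sup>2)"
    using D(2) by (simp add: ED_def prob_space)
  finally have EU: "(\<integral>\<omega>. (norm (U \<omega>))\<^sup>2 \<partial>M) \<le> ED + c\<^sub>U * (ED + \<delta>\<^sup>2)" .
  have "(\<integral>\<omega>. (norm (S \<omega>))\<^sup>2 \<partial>M) \<le> (\<integral>\<omega>. c\<^sub>S * ((norm (D \<omega>))\<^sup>2 + \<delta>\<^sup>2) \<partial>M)"
    by (rule integral_mono[OF S_int _ S_le]) (use D(2) in auto)
  also have "\<dots> = c\<^sub>S * (ED + \<delta>\<^sup>2)"
    using D(2) by (simp add: ED_def prob_space)
  finally have ES: "(\<integral>\<omega>. (norm (S \<omega>))\<^sup>2 \<partial>M) \<le> c\<^sub>S * (ED + \<delta>\<^sup>2)" .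
  note step = brownian_step_second_moment[OF BM t U U_int S S_int]
  show "integrable M (\<lambda>\<omega>. (norm (U \<omega> + S \<omega> *v (B s \<omega> - B t \<omega>)))\<^sup>2)"
    by (rule step(1))
  have "0 \<le> real CARD('p) * (s - t)"
    using t by simp
  from mult_left_mono[OF ES this] step(2) EU
  have "(\<integral>\<omega>. (norm (U \<omega> + S \<omega> *v (B s \<omega> - B t \<omega>)))\<^sup>2 \<partial>M)
      \<le> ED + c\<^sub>U * (ED + \<delta>\<^sup>2) + real CARD('p) * (s - t) * (c\<^sub>S * (ED + \<delta>\<^sup>2))"
    by linarith
  then show "(\<integral>\<omega>. (norm (U \<omega> + S \<omega> *v (B s \<omega> - B t \<omega>)))\<^sup>2 \<partial>M) + \<delta>\<^sup>2
      \<le> (1 + c\<^sub>U + real CARD('p) * (s - t) * c\<^sub>S) * ((\<integral>\<omega>. (norm (D \<omega>))\<^sup>2 \<partial>M) + \<delta>\<^sup>2)"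
    unfolding ED_def[symmetric] by (simp add: algebra_simps)
qed

section \<open>Stability of the perturbed Euler--Maruyama scheme\<close>

lemma grid_time_nonneg: "0 \<le> T \<Longrightarrow> 0 \<le> grid_time T N i"
  by (simp add: grid_time_def)

lemma grid_time_Suc: "grid_time T N (Suc i) = grid_time T N i + T / real N"
  by (simp add: grid_time_def add_divide_distrib algebra_simps)

lemma grid_time_mono: "0 \<le> T \<Longrightarrow> i \<le> j \<Longrightarrow> grid_time T N i \<le> grid_time T N j"
  unfolding grid_time_def by (rule mult_right_mono) auto

lemma grid_time_le: "0 \<le> T \<Longrightarrow> i \<le> N \<Longrightarrow> grid_time T N i \<le> T"
  by (cases "N = 0") (auto simp: grid_time_def field_simps intro: mult_left_mono)

definition euler_stability_rate :: "nat \<Rightarrow> real \<Rightarrow> real \<Rightarrow> real" where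
  "euler_stability_rate p T K = 4 * K + 2 * T * K\<^sup>2 + 2 * real p * K\<^sup>2"

lemma euler_stability_rate_ge:
  fixes h T K :: real
  assumes "0 \<le> h" "h \<le> T"
  shows "h * (4 * K + 2 * h * K\<^sup>2) + real p * h * (2 * K\<^sup>2) \<le> h * euler_stability_rate p T K"
proof -
  have "h * (2 * K\<^sup>2) \<le> T * (2 * K\<^sup>2)"
    by (rule mult_right_mono[OF assms(2)]) simp
  from mult_left_mono[OF this assms(1)] show ?thesis
    by (simp add: euler_stability_rate_def algebra_simps)
qed

locale euler_grid =
  fixes M :: "'w measure" and B :: "real \<Rightarrow> 'w \<Rightarrow> real^'p"
    and \<mu> :: "real \<Rightarrow> real^'d \<Rightarrow> 'c::second_countable_topology \<Rightarrow> real^'d"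
    and \<sigma> :: "real \<Rightarrow> real^'d \<Rightarrow> 'c \<Rightarrow> real^'p^'d"
    and A :: "'c set" and T :: real and N :: nat and K :: real
  assumes brownian: "brownian_motion M B"
    and T_pos: "0 < T" and N_pos: "1 \<le> N"
    and continuous_\<mu>: "continuous_on ({0..T} \<times> UNIV \<times> A) (\<lambda>(t, x, a). \<mu> t x a)"
    and continuous_\<sigma>: "continuous_on ({0..T} \<times> UNIV \<times> A) (\<lambda>(t, x, a). \<sigma> t x a)"
    and lipschitz_\<mu>: "\<And>a t x y. a \<in> A \<Longrightarrow> t \<in> {0..T} \<Longrightarrow> norm (\<mu> t x a - \<mu> t y a) \<le> K * norm (x - y)"
    and lipschitz_\<sigma>: "\<And>a t x y. a \<in> A \<Longrightarrow> t \<in> {0..T} \<Longrightarrow> norm (\<sigma> t x a - \<sigma> t y a) \<le> K * norm (x - y)"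
    and K_nonneg: "0 \<le> K"
begin

sublocale prob_space M
  using brownian by (rule brownian_motion_prob_space)

abbreviation X where "X \<equiv> euler_scheme \<mu> \<sigma> B T N"

abbreviation F where "F i \<equiv> BM_filtration M B (grid_time T N i)"

abbreviation h where "h \<equiv> T / real N"

lemma grid_time_in_horizon: "i \<le> N \<Longrightarrow> grid_time T N i \<in> {0..T}"
  using grid_time_nonneg grid_time_le T_pos by simp

lemma step_size: "0 < h" "h \<le> T"
  using T_pos N_pos by (simp_all add: field_simps)

lemma coefficients_adapted:
  assumes a: "a \<in> grid_controls M B T N A" and i: "i < N" and Y: "Y \<in> borel_measurable (F i)"
  shows "(\<lambda>\<omega>. \<mu> (grid_time T N i) (Y \<omega>) (a i \<omega>)) \<in> borel_measurable (F i)"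
    and "(\<lambda>\<omega>. \<sigma> (grid_time T N i) (Y \<omega>) (a i \<omega>)) \<in> borel_measurable (F i)"
  using a i grid_time_in_horizon[of i]
  by (auto simp: grid_controls_def intro!: Y borel_measurable_continuous_on_slice[OF continuous_\<mu>]
      borel_measurable_continuous_on_slice[OF continuous_\<sigma>])

lemma euler_scheme_adapted:
  assumes a: "a \<in> grid_controls M B T N A" and e: "e \<in> grid_perturbations M B T N \<epsilon>"
  shows "n + k \<le> N \<Longrightarrow> X n a e x k \<in> borel_measurable (F (n + k))"
proof (induction k)
  case 0
  have "X n a e x 0 = (\<lambda>_. x)"
    by (rule ext) simp
  then show ?case
    by simp
next
  case (Suc k)
  define i where "i = n + k"
  have "i < N" "grid_time T N i \<le> grid_time T N (Suc i)"
    using Suc.prems T_pos by (simp_all add: i_def grid_time_mono)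
  have "X n a e x k \<in> borel_measurable (F i)"
    using Suc by (simp add: i_def)
  moreover have "e i \<in> borel_measurable (F i)"
    using e \<open>i < N\<close> by (simp add: grid_perturbations_def)
  ultimately have "(\<lambda>\<omega>. X n a e x k \<omega> + e i \<omega>) \<in> borel_measurable (F i)"
    by measurable
  note coefficients = coefficients_adapted[OF a \<open>i < N\<close> this]
  have "(\<lambda>\<omega>. B (grid_time T N (Suc i)) \<omega> - B (grid_time T N i) \<omega>) \<in> borel_measurable (F (Suc i))"
    using grid_time_nonneg T_pos \<open>grid_time T N i \<le> _\<close>
    by (intro borel_measurable_diff BM_filtration_adapted) auto
  then have "(\<lambda>\<omega>. X n a e x k \<omega> + h *\<^sub>R \<mu> (grid_time T N i) (X n a e x k \<omega> + e i \<omega>) (a i \<omega>)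
      + \<sigma> (grid_time T N i) (X n a e x k \<omega> + e i \<omega>) (a i \<omega>)
          *v (B (grid_time T N (Suc i)) \<omega> - B (grid_time T N i) \<omega>)) \<in> borel_measurable (F (Suc i))"
    using measurable_BM_filtration_mono[OF \<open>grid_time T N i \<le> _\<close> \<open>X n a e x k \<in> _\<close>]
      measurable_BM_filtration_mono[OF \<open>grid_time T N i \<le> _\<close> coefficients(1)]
      measurable_BM_filtration_mono[OF \<open>grid_time T N i \<le> _\<close> coefficients(2)]
    by (intro borel_measurable_add borel_measurable_scaleR borel_measurable_const
        borel_measurable_matrix_vector_mult) auto
  then show ?case
    by (simp add: i_def Let_def)
qed

lemma coefficients_lipschitz_perturbed:
  assumes "a \<in> A" "t \<in> {0..T}" "norm (e1 - e2) \<le> \<delta>"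
  shows "norm (\<mu> t (x1 + e1) a - \<mu> t (x2 + e2) a) \<le> K * (norm (x1 - x2) + \<delta>)"
    and "norm (\<sigma> t (x1 + e1) a - \<sigma> t (x2 + e2) a) \<le> K * (norm (x1 - x2) + \<delta>)"
proof -
  have "norm ((x1 + e1) - (x2 + e2)) \<le> norm (x1 - x2) + \<delta>"
    using norm_triangle_ineq[of "x1 - x2" "e1 - e2"] assms(3) by (simp add: algebra_simps)
  then have "K * norm ((x1 + e1) - (x2 + e2)) \<le> K * (norm (x1 - x2) + \<delta>)"
    by (rule mult_left_mono[OF _ K_nonneg])
  then show "norm (\<mu> t (x1 + e1) a - \<mu> t (x2 + e2) a) \<le> K * (norm (x1 - x2) + \<delta>)"
    and "norm (\<sigma> t (x1 + e1) a - \<sigma> t (x2 + e2) a) \<le> K * (norm (x1 - x2) + \<delta>)"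
    using lipschitz_\<mu>[OF assms(1,2)] lipschitz_\<sigma>[OF assms(1,2)] by (blast intro: order_trans)+
qed

lemma euler_increment_bounds:
  assumes "a \<in> A" "t \<in> {0..T}" "norm (e1 - e2) \<le> \<delta>" "0 \<le> \<delta>"
  shows "(norm (x1 - x2 + h *\<^sub>R (\<mu> t (x1 + e1) a - \<mu> t (x2 + e2) a)))\<^sup>2
           \<le> (norm (x1 - x2))\<^sup>2 + h * (4 * K + 2 * h * K\<^sup>2) * ((norm (x1 - x2))\<^sup>2 + \<delta>\<^sup>2)"
    and "(norm (\<sigma> t (x1 + e1) a - \<sigma> t (x2 + e2) a))\<^sup>2 \<le> 2 * K\<^sup>2 * ((norm (x1 - x2))\<^sup>2 + \<delta>\<^sup>2)"
proof -
  note lipschitz = coefficients_lipschitz_perturbed[OF assms(1-3), of x1 x2]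
  have "norm (x1 - x2 + h *\<^sub>R (\<mu> t (x1 + e1) a - \<mu> t (x2 + e2) a))
      \<le> norm (x1 - x2) + h * norm (\<mu> t (x1 + e1) a - \<mu> t (x2 + e2) a)"
    by (rule order_trans[OF norm_triangle_ineq]) (use step_size in simp)
  also have "\<dots> \<le> norm (x1 - x2) + h * K * (norm (x1 - x2) + \<delta>)"
    using mult_left_mono[OF lipschitz(1), of h] step_size by (simp add: mult.assoc)
  finally show "(norm (x1 - x2 + h *\<^sub>R (\<mu> t (x1 + e1) a - \<mu> t (x2 + e2) a)))\<^sup>2
      \<le> (norm (x1 - x2))\<^sup>2 + h * (4 * K + 2 * h * K\<^sup>2) * ((norm (x1 - x2))\<^sup>2 + \<delta>\<^sup>2)"
    by (rule power2_le_drift_step[rotated 5]) (use step_size K_nonneg assms(4) in auto)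
  show "(norm (\<sigma> t (x1 + e1) a - \<sigma> t (x2 + e2) a))\<^sup>2 \<le> 2 * K\<^sup>2 * ((norm (x1 - x2))\<^sup>2 + \<delta>\<^sup>2)"
    by (rule power2_le_diffusion_step[OF K_nonneg norm_ge_zero lipschitz(2)])
qed

lemma euler_scheme_diff_step:
  assumes a: "a \<in> grid_controls M B T N A"
    and e1: "e1 \<in> grid_perturbations M B T N \<epsilon>\<^sub>1" and e2: "e2 \<in> grid_perturbations M B T N \<epsilon>\<^sub>2"
    and \<delta>: "0 \<le> \<delta>" "\<forall>i<N. \<forall>\<omega>\<in>space M. norm (e1 i \<omega> - e2 i \<omega>) \<le> \<delta>"
    and k: "n + k < N"
    and D_int: "integrable M (\<lambda>\<omega>. (norm (X n a e1 x1 k \<omega> - X n a e2 x2 k \<omega>))\<^sup>2)"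
  shows "integrable M (\<lambda>\<omega>. (norm (X n a e1 x1 (Suc k) \<omega> - X n a e2 x2 (Suc k) \<omega>))\<^sup>2)"
    and "(\<integral>\<omega>. (norm (X n a e1 x1 (Suc k) \<omega> - X n a e2 x2 (Suc k) \<omega>))\<^sup>2 \<partial>M) + \<delta>\<^sup>2
           \<le> (1 + h * euler_stability_rate CARD('p) T K) * ((\<integral>\<omega>. (norm (X n a e1 x1 k \<omega> - X n a e2 x2 k \<omega>))\<^sup>2 \<partial>M) + \<delta>\<^sup>2)"
proof -
  define i where "i = n + k"
  define t where "t = grid_time T N i"
  define Y1 where "Y1 \<omega> = X n a e1 x1 k \<omega> + e1 i \<omega>" for \<omega>
  define Y2 where "Y2 \<omega> = X n a e2 x2 k \<omega> + e2 i \<omega>" for \<omega>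
  define D where "D \<omega> = X n a e1 x1 k \<omega> - X n a e2 x2 k \<omega>" for \<omega>
  define U where "U \<omega> = D \<omega> + h *\<^sub>R (\<mu> t (Y1 \<omega>) (a i \<omega>) - \<mu> t (Y2 \<omega>) (a i \<omega>))" for \<omega>
  define S where "S \<omega> = \<sigma> t (Y1 \<omega>) (a i \<omega>) - \<sigma> t (Y2 \<omega>) (a i \<omega>)" for \<omega>
  have "i < N" "t \<in> {0..T}"
    using k grid_time_in_horizon[of i] by (simp_all add: i_def t_def)
  have step: "X n a e1 x1 (Suc k) \<omega> - X n a e2 x2 (Suc k) \<omega> = U \<omega> + S \<omega> *v (B (t + h) \<omega> - B t \<omega>)" for \<omega>
    by (simp add: U_def S_def D_def Y1_def Y2_def t_def i_def grid_time_Suc Let_def algebra_simps)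
  have X_adapted: "X n a e1 x1 k \<in> borel_measurable (F i)" "X n a e2 x2 k \<in> borel_measurable (F i)"
    using euler_scheme_adapted[OF a e1] euler_scheme_adapted[OF a e2] k by (simp_all add: i_def)
  have "e1 i \<in> borel_measurable (F i)" "e2 i \<in> borel_measurable (F i)"
    using e1 e2 \<open>i < N\<close> by (simp_all add: grid_perturbations_def)
  then have "Y1 \<in> borel_measurable (F i)" "Y2 \<in> borel_measurable (F i)"
    unfolding Y1_def[abs_def] Y2_def[abs_def] using X_adapted by (simp_all add: borel_measurable_add)
  then have U_meas: "U \<in> borel_measurable (F i)" and S_meas: "S \<in> borel_measurable (F i)"
    unfolding U_def[abs_def] S_def[abs_def] D_def[abs_def] t_def using X_adapted
    by (auto intro!: borel_measurable_add borel_measurable_diff borel_measurable_scaleR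
        coefficients_adapted[OF a \<open>i < N\<close>])
  have U_le: "(norm (U \<omega>))\<^sup>2 \<le> (norm (D \<omega>))\<^sup>2 + h * (4 * K + 2 * h * K\<^sup>2) * ((norm (D \<omega>))\<^sup>2 + \<delta>\<^sup>2)"
    and S_le: "(norm (S \<omega>))\<^sup>2 \<le> 2 * K\<^sup>2 * ((norm (D \<omega>))\<^sup>2 + \<delta>\<^sup>2)" if "\<omega> \<in> space M" for \<omega>
    using euler_increment_bounds[of "a i \<omega>" t "e1 i \<omega>" "e2 i \<omega>" \<delta>] a \<delta> \<open>i < N\<close> \<open>t \<in> _\<close> that
    unfolding U_def S_def D_def Y1_def Y2_def by (auto simp: grid_controls_def)
  have D_meas: "D \<in> borel_measurable M"
    unfolding D_def[abs_def]
    using measurable_from_BM_filtration[OF brownian X_adapted(1)]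
      measurable_from_BM_filtration[OF brownian X_adapted(2)] by (rule borel_measurable_diff)
  have "0 \<le> t" "t < t + h"
    using \<open>t \<in> _\<close> step_size by auto
  note growth = brownian_step_second_moment_growth[OF brownian this U_meas[unfolded t_def[symmetric]]
      S_meas[unfolded t_def[symmetric]] D_meas D_int[folded D_def] _ _ U_le S_le]
  show "integrable M (\<lambda>\<omega>. (norm (X n a e1 x1 (Suc k) \<omega> - X n a e2 x2 (Suc k) \<omega>))\<^sup>2)"
    unfolding step using growth(1) step_size K_nonneg by simp
  have rate: "1 + h * (4 * K + 2 * h * K\<^sup>2) + real CARD('p) * (t + h - t) * (2 * K\<^sup>2)
      \<le> 1 + h * euler_stability_rate CARD('p) T K"
    using euler_stability_rate_ge[of h T K "CARD('p)"] step_size by simp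
  have "(\<integral>\<omega>. (norm (U \<omega> + S \<omega> *v (B (t + h) \<omega> - B t \<omega>)))\<^sup>2 \<partial>M) + \<delta>\<^sup>2
      \<le> (1 + h * (4 * K + 2 * h * K\<^sup>2) + real CARD('p) * (t + h - t) * (2 * K\<^sup>2))
          * ((\<integral>\<omega>. (norm (D \<omega>))\<^sup>2 \<partial>M) + \<delta>\<^sup>2)"
    by (rule growth(2)) (use step_size K_nonneg in auto)
  also have "\<dots> \<le> (1 + h * euler_stability_rate CARD('p) T K) * ((\<integral>\<omega>. (norm (D \<omega>))\<^sup>2 \<partial>M) + \<delta>\<^sup>2)"
    by (rule mult_right_mono[OF rate]) simp
  finally show "(\<integral>\<omega>. (norm (X n a e1 x1 (Suc k) \<omega> - X n a e2 x2 (Suc k) \<omega>))\<^sup>2 \<partial>M) + \<delta>\<^sup>2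
      \<le> (1 + h * euler_stability_rate CARD('p) T K) * ((\<integral>\<omega>. (norm (X n a e1 x1 k \<omega> - X n a e2 x2 k \<omega>))\<^sup>2 \<partial>M) + \<delta>\<^sup>2)"
    unfolding step D_def[symmetric] .
qed

lemma euler_scheme_diff_second_moment:
  assumes a: "a \<in> grid_controls M B T N A"
    and e1: "e1 \<in> grid_perturbations M B T N \<epsilon>\<^sub>1" and e2: "e2 \<in> grid_perturbations M B T N \<epsilon>\<^sub>2"
    and \<delta>: "0 \<le> \<delta>" "\<forall>i<N. \<forall>\<omega>\<in>space M. norm (e1 i \<omega> - e2 i \<omega>) \<le> \<delta>"
  shows "n + k \<le> N \<Longrightarrow> integrable M (\<lambda>\<omega>. (norm (X n a e1 x1 k \<omega> - X n a e2 x2 k \<omega>))\<^sup>2) \<and>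
    (\<integral>\<omega>. (norm (X n a e1 x1 k \<omega> - X n a e2 x2 k \<omega>))\<^sup>2 \<partial>M) + \<delta>\<^sup>2
      \<le> (1 + h * euler_stability_rate CARD('p) T K) ^ k * ((norm (x1 - x2))\<^sup>2 + \<delta>\<^sup>2)"
proof (induction k)
  case 0
  then show ?case
    by (simp add: prob_space)
next
  case (Suc k)
  then have "n + k < N"
    by simp
  with Suc.IH have IH: "integrable M (\<lambda>\<omega>. (norm (X n a e1 x1 k \<omega> - X n a e2 x2 k \<omega>))\<^sup>2)"
    "(\<integral>\<omega>. (norm (X n a e1 x1 k \<omega> - X n a e2 x2 k \<omega>))\<^sup>2 \<partial>M) + \<delta>\<^sup>2
      \<le> (1 + h * euler_stability_rate CARD('p) T K) ^ k * ((norm (x1 - x2))\<^sup>2 + \<delta>\<^sup>2)"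
    by simp_all
  note step = euler_scheme_diff_step[OF a e1 e2 \<delta> \<open>n + k < N\<close> IH(1)]
  have "0 \<le> 1 + h * euler_stability_rate CARD('p) T K"
    using step_size K_nonneg by (simp add: euler_stability_rate_def)
  from step(2) mult_left_mono[OF IH(2) this] show ?case
    using step(1) by simp
qed

lemma euler_scheme_diff_second_moment_exp:
  assumes a: "a \<in> grid_controls M B T N A"
    and e1: "e1 \<in> grid_perturbations M B T N \<epsilon>\<^sub>1" and e2: "e2 \<in> grid_perturbations M B T N \<epsilon>\<^sub>2"
    and \<delta>: "0 \<le> \<delta>" "\<forall>i<N. \<forall>\<omega>\<in>space M. norm (e1 i \<omega> - e2 i \<omega>) \<le> \<delta>"
    and n: "n \<le> N"
  shows "integrable M (\<lambda>\<omega>. (norm (X n a e1 x1 (N - n) \<omega> - X n a e2 x2 (N - n) \<omega>))\<^sup>2)"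
    and "(\<integral>\<omega>. (norm (X n a e1 x1 (N - n) \<omega> - X n a e2 x2 (N - n) \<omega>))\<^sup>2 \<partial>M)
           \<le> exp (euler_stability_rate CARD('p) T K * T) * ((norm (x1 - x2))\<^sup>2 + \<delta>\<^sup>2)"
proof -
  define r where "r = euler_stability_rate CARD('p) T K"
  note moment = euler_scheme_diff_second_moment[OF a e1 e2 \<delta>, of n "N - n" x1 x2]
  show "integrable M (\<lambda>\<omega>. (norm (X n a e1 x1 (N - n) \<omega> - X n a e2 x2 (N - n) \<omega>))\<^sup>2)"
    using moment n by simp
  have "0 \<le> h * r"
    using step_size K_nonneg by (simp add: r_def euler_stability_rate_def)
  then have "(1 + h * r) ^ (N - n) \<le> (1 + h * r) ^ N"
    by (intro power_increasing) auto
  also have "\<dots> \<le> exp (r * T)"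
    using one_plus_power_le_exp[OF \<open>0 \<le> h * r\<close>, of N] N_pos by (simp add: mult.commute)
  finally have "(1 + h * r) ^ (N - n) * ((norm (x1 - x2))\<^sup>2 + \<delta>\<^sup>2) \<le> exp (r * T) * ((norm (x1 - x2))\<^sup>2 + \<delta>\<^sup>2)"
    by (rule mult_right_mono) simp
  then show "(\<integral>\<omega>. (norm (X n a e1 x1 (N - n) \<omega> - X n a e2 x2 (N - n) \<omega>))\<^sup>2 \<partial>M)
      \<le> exp (euler_stability_rate CARD('p) T K * T) * ((norm (x1 - x2))\<^sup>2 + \<delta>\<^sup>2)"
    using moment n zero_le_power2[of \<delta>] unfolding r_def by linarith
qed

lemma expected_payoff_diff_le:
  assumes a: "a \<in> grid_controls M B T N A"
    and e1: "e1 \<in> grid_perturbations M B T N \<epsilon>\<^sub>1" and e2: "e2 \<in> grid_perturbations M B T N \<epsilon>\<^sub>2"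
    and \<delta>: "0 \<le> \<delta>" "\<forall>i<N. \<forall>\<omega>\<in>space M. norm (e1 i \<omega> - e2 i \<omega>) \<le> \<delta>"
    and n: "n \<le> N"
    and \<psi>: "\<psi> \<in> borel_measurable borel" "\<And>x y. \<bar>\<psi> x - \<psi> y\<bar> \<le> L * norm (x - y)" "0 \<le> L"
  shows "\<bar>(\<integral>\<omega>. \<psi> (X n a e1 x1 (N - n) \<omega>) \<partial>M) - (\<integral>\<omega>. \<psi> (X n a e2 x2 (N - n) \<omega>) \<partial>M)\<bar>
           \<le> L * exp (euler_stability_rate CARD('p) T K * T / 2) * sqrt ((norm (x1 - x2))\<^sup>2 + \<delta>\<^sup>2)"
proof -
  define b where "b = exp (euler_stability_rate CARD('p) T K * T / 2) * sqrt ((norm (x1 - x2))\<^sup>2 + \<delta>\<^sup>2)"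
  have "b\<^sup>2 = exp (euler_stability_rate CARD('p) T K * T) * ((norm (x1 - x2))\<^sup>2 + \<delta>\<^sup>2)"
    by (simp add: b_def power_mult_distrib flip: exp_of_nat_mult)
  note moment = euler_scheme_diff_second_moment_exp[OF a e1 e2 \<delta> n, of x1 x2, folded this]
  have "X n a e1 x1 (N - n) \<in> borel_measurable M" "X n a e2 x2 (N - n) \<in> borel_measurable M"
    using measurable_from_BM_filtration[OF brownian euler_scheme_adapted[OF a e1, of n "N - n"]]
      measurable_from_BM_filtration[OF brownian euler_scheme_adapted[OF a e2, of n "N - n"]] n
    by simp_all
  from integral_lipschitz_diff_le[OF this \<psi>(1) \<psi>(2,3) moment] show ?thesis
    by (simp add: b_def mult.assoc)
qed

lemma v_eps_lipschitz:
  assumes \<psi>: "\<psi> \<in> borel_measurable borel" "\<And>x y. \<bar>\<psi> x - \<psi> y\<bar> \<le> L * norm (x - y)" "0 \<le> L"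
    and n: "n \<le> N"
  shows "\<bar>v_eps M B \<mu> \<sigma> A \<psi> T N \<epsilon> n x - v_eps M B \<mu> \<sigma> A \<psi> T N \<epsilon> n y\<bar>
           \<le> L * exp (euler_stability_rate CARD('p) T K * T / 2) * norm (x - y)"
proof -
  have "\<bar>(\<integral>\<omega>. \<psi> (X n (fst ae) (snd ae) x (N - n) \<omega>) \<partial>M) - (\<integral>\<omega>. \<psi> (X n (fst ae) (snd ae) y (N - n) \<omega>) \<partial>M)\<bar>
      \<le> L * exp (euler_stability_rate CARD('p) T K * T / 2) * norm (x - y)"
    if "ae \<in> grid_controls M B T N A \<times> grid_perturbations M B T N \<epsilon>" for ae
    using that expected_payoff_diff_le[of "fst ae" "snd ae" \<epsilon> "snd ae" \<epsilon> 0 n \<psi> L x y, OF _ _ _ _ _ n \<psi>]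
    by (auto simp: mem_Times_iff)
  note payoff = this
  show ?thesis
    unfolding v_eps_def by (rule cSUP_abs_diff_le) (simp add: \<psi>(3), (use payoff in blast)+)
qed

lemma v_tilde_v_eps_diff:
  assumes \<psi>: "\<psi> \<in> borel_measurable borel" "\<And>x y. \<bar>\<psi> x - \<psi> y\<bar> \<le> L * norm (x - y)" "0 \<le> L"
    and n: "n \<le> N" and \<epsilon>: "0 \<le> \<epsilon>"
  shows "\<bar>v_tilde M B \<mu> \<sigma> A \<psi> T N n x - v_eps M B \<mu> \<sigma> A \<psi> T N \<epsilon> n x\<bar>
           \<le> L * exp (euler_stability_rate CARD('p) T K * T / 2) * \<epsilon>"
proof -
  have zero: "(\<lambda>_ _. 0) \<in> grid_perturbations M B T N \<epsilon>"
    using \<epsilon> by (simp add: grid_perturbations_def)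
  have "\<bar>(\<integral>\<omega>. \<psi> (X n a (\<lambda>_ _. 0) x (N - n) \<omega>) \<partial>M) - (\<integral>\<omega>. \<psi> (X n a e x (N - n) \<omega>) \<partial>M)\<bar>
      \<le> L * exp (euler_stability_rate CARD('p) T K * T / 2) * \<epsilon>"
    if "a \<in> grid_controls M B T N A" "e \<in> grid_perturbations M B T N \<epsilon>" for a e
    using expected_payoff_diff_le[OF that(1) zero that(2) \<epsilon> _ n \<psi>, of x x] that(2) \<epsilon>
    by (simp add: grid_perturbations_def norm_minus_commute)
  note payoff = this
  show ?thesis
    unfolding v_eps_def v_tilde_def
  proof (rule cSUP_abs_diff_le)
    fix a assume "a \<in> grid_controls M B T N A"
    then show "\<exists>ae\<in>grid_controls M B T N A \<times> grid_perturbations M B T N \<epsilon>.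
        \<bar>(\<integral>\<omega>. \<psi> (X n a (\<lambda>_ _. 0) x (N - n) \<omega>) \<partial>M) - (\<integral>\<omega>. \<psi> (X n (fst ae) (snd ae) x (N - n) \<omega>) \<partial>M)\<bar>
          \<le> L * exp (euler_stability_rate CARD('p) T K * T / 2) * \<epsilon>"
      using payoff[OF _ zero] zero by (intro bexI[of _ "(a, \<lambda>_ _. 0)"]) auto
  next
    fix ae :: "(nat \<Rightarrow> 'w \<Rightarrow> 'c) \<times> (nat \<Rightarrow> 'w \<Rightarrow> real^'d)"
    assume "ae \<in> grid_controls M B T N A \<times> grid_perturbations M B T N \<epsilon>"
    then show "\<exists>a\<in>grid_controls M B T N A.
        \<bar>(\<integral>\<omega>. \<psi> (X n a (\<lambda>_ _. 0) x (N - n) \<omega>) \<partial>M) - (\<integral>\<omega>. \<psi> (X n (fst ae) (snd ae) x (N - n) \<omega>) \<partial>M)\<bar>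
          \<le> L * exp (euler_stability_rate CARD('p) T K * T / 2) * \<epsilon>"
      using payoff by (intro bexI[of _ "fst ae"]) (auto simp: mem_Times_iff)
  qed (use \<psi>(3) \<epsilon> in simp)
qed

end

theorem proposition4p1:
  fixes M :: "'w measure" and B :: "real \<Rightarrow> 'w \<Rightarrow> real^'p"
    and \<mu> :: "real \<Rightarrow> real^'d \<Rightarrow> real^'q \<Rightarrow> real^'d"
    and \<sigma> :: "real \<Rightarrow> real^'d \<Rightarrow> real^'q \<Rightarrow> real^'p^'d"
    and A :: "(real^'q) set" and \<psi> :: "real^'d \<Rightarrow> real" and T C\<^sub>0 L :: real
  assumes "T > 0"
    and "brownian_motion M B"
    and "compact A"
    and "continuous_on ({0..T} \<times> UNIV \<times> A) (\<lambda>(t, x, a). \<mu> t x a)"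
    and "continuous_on ({0..T} \<times> UNIV \<times> A) (\<lambda>(t, x, a). \<sigma> t x a)"
    and "\<forall>a\<in>A. \<forall>t\<in>{0..T}. \<forall>s\<in>{0..T}. \<forall>x y.
           norm (\<mu> t x a - \<mu> s y a) + norm (\<sigma> t x a - \<sigma> s y a)
             \<le> C\<^sub>0 * (norm (x - y) + sqrt \<bar>t - s\<bar>)"
    and "continuous_on UNIV \<psi>"
    and "\<forall>x y. \<bar>\<psi> x - \<psi> y\<bar> \<le> L * norm (x - y)"
  shows "\<exists>C\<ge>0. \<forall>N::nat. N \<ge> 1 \<longrightarrow> (\<forall>\<epsilon>>0. \<forall>n\<le>N. \<forall>x y.
           \<bar>v_eps M B \<mu> \<sigma> A \<psi> T N \<epsilon> n x - v_eps M B \<mu> \<sigma> A \<psi> T N \<epsilon> n y\<bar>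
              \<le> L * C * norm (x - y)
         \<and> \<bar>v_tilde M B \<mu> \<sigma> A \<psi> T N n x - v_eps M B \<mu> \<sigma> A \<psi> T N \<epsilon> n x\<bar> \<le> L * C * \<epsilon>)"
proof -
  define K where "K = \<bar>C\<^sub>0\<bar>"
  have lipschitz: "norm (\<mu> t x a - \<mu> t y a) \<le> K * norm (x - y) \<and> norm (\<sigma> t x a - \<sigma> t y a) \<le> K * norm (x - y)"
    if "a \<in> A" "t \<in> {0..T}" for a t x y
    using assms(6)[rule_format, OF that(1,2,2), of x y] mult_right_mono[OF abs_ge_self norm_ge_zero]
      norm_ge_zero[of "\<mu> t x a - \<mu> t y a"] norm_ge_zero[of "\<sigma> t x a - \<sigma> t y a"]
    unfolding K_def by (smt (verit) add_0_right abs_zero diff_self real_sqrt_zero)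
  have grid: "euler_grid M B \<mu> \<sigma> A T N K" if "1 \<le> N" for N
    using assms(1,2,4,5) lipschitz that by unfold_locales (auto simp: K_def)
  have \<psi>: "\<psi> \<in> borel_measurable borel" "0 \<le> L"
    using assms(7,8) by (auto intro: borel_measurable_continuous_onI lipschitz_constant_nonneg)
  show ?thesis
  proof (intro exI[of _ "exp (euler_stability_rate CARD('p) T K * T / 2)"] conjI allI impI)
    fix N n :: nat and \<epsilon> :: real and x y :: "real^'d"
    assume "1 \<le> N" "0 < \<epsilon>" "n \<le> N"
    interpret euler_grid M B \<mu> \<sigma> A T N K
      by (rule grid[OF \<open>1 \<le> N\<close>])
    show "\<bar>v_eps M B \<mu> \<sigma> A \<psi> T N \<epsilon> n x - v_eps M B \<mu> \<sigma> A \<psi> T N \<epsilon> n y\<bar>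
        \<le> L * exp (euler_stability_rate CARD('p) T K * T / 2) * norm (x - y)"
      using v_eps_lipschitz[OF \<psi>(1) _ \<psi>(2) \<open>n \<le> N\<close>] assms(8) by blast
    show "\<bar>v_tilde M B \<mu> \<sigma> A \<psi> T N n x - v_eps M B \<mu> \<sigma> A \<psi> T N \<epsilon> n x\<bar>
        \<le> L * exp (euler_stability_rate CARD('p) T K * T / 2) * \<epsilon>"
      using v_tilde_v_eps_diff[OF \<psi>(1) _ \<psi>(2) \<open>n \<le> N\<close>] assms(8) \<open>0 < \<epsilon>\<close> by simp
  qed simp
qed

end
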